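(* Let $\mathbb{A}$ be a 2-category and $p:e\to b$ a 1-cell such that $\mathbb{A}$ has the two-dimensional cokernel diagram of $p$, a right Kan extension $(t,\gamma)$ of $p$ along $p$ exists, and it is preserved by $\delta^0:b\to b\uparrow_pb$. Let $\mathsf{T}$ be the codensity monad of $p$. Then $\mathbb{A}$ has an Eilenberg–Moore object of $\mathsf{T}$ if and only if $\mathbb{A}$ has a lax descent object of the two-dimensional cokernel diagram of $p$, and in that case the semantic factorization $p=u\,p^{\mathsf{T}}$ of $p$ is isomorphic to the semantic lax descent factorization $p=d\,p^{H}$ of $p$, i.e. there is an isomorphism $\varphi:L\to b^{\mathsf{T}}$ with $u\varphi=d$ and $\varphi p^H=p^{\mathsf{T}}$.
   Context: A 2-category is a $\mathbf{Cat}$-enriched category; composition of 1-cells is juxtaposition, vertical composition of 2-cells is $\cdot$, horizontal composition is $\ast$, $\mathrm{id}_f$ is the identity 2-cell on $f$. Opcomma object of $p$ along itself: an object $b\uparrow_p b$ with 1-cells $\delta^0,\delta^1:b\to b\uparrow_p b$ and a 2-cell $\alpha:\delta^1p\Rightarrow\delta^0p$ such that for every object $y$ the functor $h\mapsto(h\delta^0,h\delta^1,\mathrm{id}_h\ast\alpha)$, $\xi\mapsto(\xi\ast\mathrm{id}_{\delta^0},\xi\ast\mathrm{id}_{\delta^1})$ is an isomorphism from $\mathbb{A}(b\uparrow_p b,y)$ onto the category of triples $(h_0,h_1:b\to y,\ \beta:h_1p\Rightarrow h_0p)$ with morphisms pairs of 2-cells $(\xi_0:h_0\Rightarrow h_0',\xi_1:h_1\Rightarrow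 h_1')$ satisfying $(\xi_0\ast\mathrm{id}_p)\cdot\beta=\beta'\cdot(\xi_1\ast\mathrm{id}_p)$. Two-dimensional pushout of a span $f_0:c\to c_0$, $f_1:c\to c_1$: an object $P$ with $q_0:c_0\to P$, $q_1:c_1\to P$, $q_0f_0=q_1f_1$, such that for every $y$, $k\mapsto(kq_0,kq_1)$ is an isomorphism from $\mathbb{A}(P,y)$ onto the category of pairs $(k_0,k_1)$ with $k_0f_0=k_1f_1$, whose morphisms are pairs of 2-cells $(\xi_0,\xi_1)$ with $\xi_0\ast\mathrm{id}_{f_0}=\xi_1\ast\mathrm{id}_{f_1}$. $\mathbb{A}$ has the two-dimensional cokernel diagram of $p$ if it has an opcomma object $b\uparrow_p b$ and a two-dimensional pushout $b\uparrow_pb\uparrow_pb$ of the span $(\delta^0,\delta^1)$, with 1-cells $D^0,D^2$ satisfying $D^2\delta^0=D^0\delta^1$; $D^1$ is the unique 1-cell with $D^1\delta^1=D^2\delta^1$, $D^1\delta^0=D^0\delta^0$, $\mathrm{id}_{D^1}\ast\alpha=(\mathrm{id}_{D^0}\ast\alpha)\cdot(\mathrm{id}_{D^2}\ast\alpha)$; $s^0:b\uparrow_pb\to b$ is the unique 1-cell with $s^0\delta^0=s^0\delta^1=\mathrm{id}_b$, $\mathrm{id}_{s^0}\ast\alpha=\mathrm{id}_p$. The two-dimensional cokernel diagram of $p$ is the diagram formed by $b,b\uparrow_pb,b\uparrow_pb\uparrow_pb$ and $\delta^0,\delta^1,s^0,D^0,D^1,D^2$. Lax descent object: for an object $y$,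 $\mathrm{Desc}_p(y)$ has objects pairs $(h:y\to b,\beta:\delta^1h\Rightarrow\delta^0h)$ with $(\mathrm{id}_{D^0}\ast\beta)\cdot(\mathrm{id}_{D^2}\ast\beta)=\mathrm{id}_{D^1}\ast\beta$ and $\mathrm{id}_{s^0}\ast\beta=\mathrm{id}_h$, and morphisms $(h_1,\beta_1)\to(h_0,\beta_0)$ the 2-cells $\xi:h_1\Rightarrow h_0$ with $\beta_0\cdot(\mathrm{id}_{\delta^1}\ast\xi)=(\mathrm{id}_{\delta^0}\ast\xi)\cdot\beta_1$. A lax descent object of the two-dimensional cokernel diagram is an object $L$ with $d:L\to b$ and $\Psi:\delta^1d\Rightarrow\delta^0d$ such that for each $y$ the functor $g\mapsto(dg,\Psi\ast\mathrm{id}_g)$, $\xi\mapsto\mathrm{id}_d\ast\xi$ is an isomorphism $\mathbb{A}(y,L)\to\mathrm{Desc}_p(y)$. Since $(p,\alpha)\in\mathrm{Desc}_p(e)$, there is a unique $p^H:e\to L$ with $dp^H=p$ and $\Psi\ast\mathrm{id}_{p^H}=\alpha$; $p=d\,p^H$ is the semantic lax descent factorization of $p$. Right Kan extension of $f:z\to y$ along $g:z\to w$: a pair $(r,\gamma:rg\Rightarrow f)$ such that for each $k:w\to y$, $\beta\mapsto\gamma\cdot(\beta\ast\mathrm{id}_g)$ is a bijection from 2-cells $k\Rightarrow r$ to 2-cells $kg\Rightarrow f$; a 1-cell $\delta$ preserves it if $(\delta r,\mathrm{id}_\delta\ast\gamma)$ is a right Kan extension of $\delta f$ along $g$. Codensity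 monad $\mathsf{T}=(b,t,m,\eta)$: $m:tt\Rightarrow t$ unique with $\gamma\cdot(m\ast\mathrm{id}_p)=\gamma\cdot(\mathrm{id}_t\ast\gamma)$, $\eta:\mathrm{id}_b\Rightarrow t$ unique with $\gamma\cdot(\eta\ast\mathrm{id}_p)=\mathrm{id}_p$. Eilenberg–Moore object: for $y$, $\mathrm{Alg}_{\mathsf{T}}(y)$ has objects $(h:y\to b,\beta:th\Rightarrow h)$ with $\beta\cdot(\mathrm{id}_t\ast\beta)=\beta\cdot(m\ast\mathrm{id}_h)$, $\beta\cdot(\eta\ast\mathrm{id}_h)=\mathrm{id}_h$, morphisms 2-cells $\xi:h_1\Rightarrow h_0$ with $\xi\cdot\beta_1=\beta_0\cdot(\mathrm{id}_t\ast\xi)$. An Eilenberg–Moore object is $b^{\mathsf{T}}$ with $u:b^{\mathsf{T}}\to b$, $\mu:tu\Rightarrow u$ such that $g\mapsto(ug,\mu\ast\mathrm{id}_g)$, $\xi\mapsto\mathrm{id}_u\ast\xi$ is an isomorphism $\mathbb{A}(y,b^{\mathsf{T}})\to\mathrm{Alg}_{\mathsf{T}}(y)$ for each $y$. The semantic factorization of $p$ is $p=u\,p^{\mathsf{T}}$ with $p^{\mathsf{T}}:e\to b^{\mathsf{T}}$ the unique 1-cell with $up^{\mathsf{T}}=p$ and $\mu\ast\mathrm{id}_{p^{\mathsf{T}}}=\gamma$. *)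

theory Defs
  imports Main
begin

text \<open>Objects live in type 'o, 1-cells in 'a, 2-cells in 'c.  comp1 g f is the
composite "g f" (first f, then g), hcomp is horizontal composition (same order),
vcomp beta alpha is vertical composition (first alpha, then beta).\<close>

record ('o, 'a, 'c) two_cat =
  obj    :: "'o set"
  arr1   :: "'a set"
  arr2   :: "'c set"
  src1   :: "'a \<Rightarrow> 'o"
  tgt1   :: "'a \<Rightarrow> 'o"
  src2   :: "'c \<Rightarrow> 'a"
  tgt2   :: "'c \<Rightarrow> 'a"
  comp1  :: "'a \<Rightarrow> 'a \<Rightarrow> 'a"
  ident1 :: "'o \<Rightarrow> 'a"
  vcomp  :: "'c \<Rightarrow> 'c \<Rightarrow> 'c"
  hcomp  :: "'c \<Rightarrow> 'c \<Rightarrow> 'c"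
  ident2 :: "'a \<Rightarrow> 'c"

definition Hom :: "('o, 'a, 'c, 'z) two_cat_scheme \<Rightarrow> 'o \<Rightarrow> 'o \<Rightarrow> 'a set" where
  "Hom A x y = {f \<in> arr1 A. src1 A f = x \<and> tgt1 A f = y}"

definition Cell :: "('o, 'a, 'c, 'z) two_cat_scheme \<Rightarrow> 'a \<Rightarrow> 'a \<Rightarrow> 'c set" where
  "Cell A f g = {\<alpha> \<in> arr2 A. src2 A \<alpha> = f \<and> tgt2 A \<alpha> = g}"

definition two_category :: "('o, 'a, 'c, 'z) two_cat_scheme \<Rightarrow> bool" where
  "two_category A \<longleftrightarrow>
     \<comment> \<open>underlying category of objects and 1-cells\<close>
     (\<forall>f \<in> arr1 A. src1 A f \<in> obj A \<and> tgt1 A f \<in> obj A) \<and>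
     (\<forall>x \<in> obj A. ident1 A x \<in> Hom A x x) \<and>
     (\<forall>f \<in> arr1 A. \<forall>g \<in> arr1 A. tgt1 A f = src1 A g \<longrightarrow>
          comp1 A g f \<in> Hom A (src1 A f) (tgt1 A g)) \<and>
     (\<forall>f \<in> arr1 A. \<forall>g \<in> arr1 A. \<forall>h \<in> arr1 A.
          tgt1 A f = src1 A g \<longrightarrow> tgt1 A g = src1 A h \<longrightarrow>
          comp1 A h (comp1 A g f) = comp1 A (comp1 A h g) f) \<and>
     (\<forall>f \<in> arr1 A. comp1 A (ident1 A (tgt1 A f)) f = f \<and>
                    comp1 A f (ident1 A (src1 A f)) = f) \<and>
     \<comment> \<open>2-cells between parallel 1-cells\<close>
     (\<forall>\<alpha> \<in> arr2 A. src2 A \<alpha> \<in> arr1 A \<and> tgt2 A \<alpha> \<in> arr1 A \<and>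
          src1 A (src2 A \<alpha>) = src1 A (tgt2 A \<alpha>) \<and>
          tgt1 A (src2 A \<alpha>) = tgt1 A (tgt2 A \<alpha>)) \<and>
     \<comment> \<open>hom-categories: vertical composition\<close>
     (\<forall>f \<in> arr1 A. ident2 A f \<in> Cell A f f) \<and>
     (\<forall>\<alpha> \<in> arr2 A. \<forall>\<beta> \<in> arr2 A. tgt2 A \<alpha> = src2 A \<beta> \<longrightarrow>
          vcomp A \<beta> \<alpha> \<in> Cell A (src2 A \<alpha>) (tgt2 A \<beta>)) \<and>
     (\<forall>\<alpha> \<in> arr2 A. \<forall>\<beta> \<in> arr2 A. \<forall>\<gamma> \<in> arr2 A.
          tgt2 A \<alpha> = src2 A \<beta> \<longrightarrow> tgt2 A \<beta> = src2 A \<gamma> \<longrightarrow>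
          vcomp A \<gamma> (vcomp A \<beta> \<alpha>) = vcomp A (vcomp A \<gamma> \<beta>) \<alpha>) \<and>
     (\<forall>\<alpha> \<in> arr2 A. vcomp A (ident2 A (tgt2 A \<alpha>)) \<alpha> = \<alpha> \<and>
                    vcomp A \<alpha> (ident2 A (src2 A \<alpha>)) = \<alpha>) \<and>
     \<comment> \<open>horizontal composition: a functor A(y,z) x A(x,y) -> A(x,z)\<close>
     (\<forall>\<alpha> \<in> arr2 A. \<forall>\<beta> \<in> arr2 A. tgt1 A (src2 A \<alpha>) = src1 A (src2 A \<beta>) \<longrightarrow>
          hcomp A \<beta> \<alpha> \<in> Cell A (comp1 A (src2 A \<beta>) (src2 A \<alpha>))
                                 (comp1 A (tgt2 A \<beta>) (tgt2 A \<alpha>))) \<and>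
     (\<forall>f \<in> arr1 A. \<forall>g \<in> arr1 A. tgt1 A f = src1 A g \<longrightarrow>
          hcomp A (ident2 A g) (ident2 A f) = ident2 A (comp1 A g f)) \<and>
     (\<forall>\<alpha> \<in> arr2 A. \<forall>\<alpha>' \<in> arr2 A. \<forall>\<beta> \<in> arr2 A. \<forall>\<beta>' \<in> arr2 A.
          tgt2 A \<alpha> = src2 A \<alpha>' \<longrightarrow> tgt2 A \<beta> = src2 A \<beta>' \<longrightarrow>
          tgt1 A (src2 A \<alpha>) = src1 A (src2 A \<beta>) \<longrightarrow>
          hcomp A (vcomp A \<beta>' \<beta>) (vcomp A \<alpha>' \<alpha>) =
          vcomp A (hcomp A \<beta>' \<alpha>') (hcomp A \<beta> \<alpha>)) \<and>
     \<comment> \<open>associativity and unit laws for horizontal composition\<close>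
     (\<forall>\<alpha> \<in> arr2 A. \<forall>\<beta> \<in> arr2 A. \<forall>\<gamma> \<in> arr2 A.
          tgt1 A (src2 A \<alpha>) = src1 A (src2 A \<beta>) \<longrightarrow>
          tgt1 A (src2 A \<beta>) = src1 A (src2 A \<gamma>) \<longrightarrow>
          hcomp A \<gamma> (hcomp A \<beta> \<alpha>) = hcomp A (hcomp A \<gamma> \<beta>) \<alpha>) \<and>
     (\<forall>\<alpha> \<in> arr2 A. hcomp A (ident2 A (ident1 A (tgt1 A (src2 A \<alpha>)))) \<alpha> = \<alpha> \<and>
                    hcomp A \<alpha> (ident2 A (ident1 A (src1 A (src2 A \<alpha>)))) = \<alpha>)"

text \<open>Isomorphism of categories: a functor (F0 on objects, F1 on morphisms) that is
bijective on objects and on each hom-set.  Categories are given by their object set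
and their hom-set function.\<close>

definition cat_iso ::
  "'x set \<Rightarrow> ('x \<Rightarrow> 'x \<Rightarrow> 'm set) \<Rightarrow> 'y set \<Rightarrow> ('y \<Rightarrow> 'y \<Rightarrow> 'n set)
   \<Rightarrow> ('x \<Rightarrow> 'y) \<Rightarrow> ('m \<Rightarrow> 'n) \<Rightarrow> bool" where
  "cat_iso O1 H1 O2 H2 F0 F1 \<longleftrightarrow>
     bij_betw F0 O1 O2 \<and>
     (\<forall>X \<in> O1. \<forall>X' \<in> O1. bij_betw F1 (H1 X X') (H2 (F0 X) (F0 X')))"

definition iso1 :: "('o, 'a, 'c, 'z) two_cat_scheme \<Rightarrow> 'a \<Rightarrow> 'o \<Rightarrow> 'o \<Rightarrow> bool" where
  "iso1 A \<phi> x y \<longleftrightarrow> \<phi> \<in> Hom A x y \<and>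
     (\<exists>\<psi> \<in> Hom A y x. comp1 A \<psi> \<phi> = ident1 A x \<and> comp1 A \<phi> \<psi> = ident1 A y)"

definition opc_obj :: "('o, 'a, 'c, 'z) two_cat_scheme \<Rightarrow> 'a \<Rightarrow> 'o \<Rightarrow> ('a \<times> 'a \<times> 'c) set" where
  "opc_obj A p y = {(h0, h1, \<beta>). h0 \<in> Hom A (tgt1 A p) y \<and> h1 \<in> Hom A (tgt1 A p) y \<and>
                       \<beta> \<in> Cell A (comp1 A h1 p) (comp1 A h0 p)}"

definition opc_mor :: "('o, 'a, 'c, 'z) two_cat_scheme \<Rightarrow> 'a
    \<Rightarrow> ('a \<times> 'a \<times> 'c) \<Rightarrow> ('a \<times> 'a \<times> 'c) \<Rightarrow> ('c \<times> 'c) set" where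
  "opc_mor A p X X' = (case X of (h0, h1, \<beta>) \<Rightarrow> case X' of (h0', h1', \<beta>') \<Rightarrow>
     {(\<xi>0, \<xi>1). \<xi>0 \<in> Cell A h0 h0' \<and> \<xi>1 \<in> Cell A h1 h1' \<and>
        vcomp A (hcomp A \<xi>0 (ident2 A p)) \<beta> = vcomp A \<beta>' (hcomp A \<xi>1 (ident2 A p))})"

definition is_opcomma :: "('o, 'a, 'c, 'z) two_cat_scheme \<Rightarrow> 'a \<Rightarrow> 'o \<Rightarrow> 'a \<Rightarrow> 'a \<Rightarrow> 'c \<Rightarrow> bool" where
  "is_opcomma A p C \<delta>0 \<delta>1 \<alpha> \<longleftrightarrow>
     C \<in> obj A \<and> \<delta>0 \<in> Hom A (tgt1 A p) C \<and> \<delta>1 \<in> Hom A (tgt1 A p) C \<and>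
     \<alpha> \<in> Cell A (comp1 A \<delta>1 p) (comp1 A \<delta>0 p) \<and>
     (\<forall>y \<in> obj A. cat_iso (Hom A C y) (Cell A) (opc_obj A p y) (opc_mor A p)
        (\<lambda>h. (comp1 A h \<delta>0, comp1 A h \<delta>1, hcomp A (ident2 A h) \<alpha>))
        (\<lambda>\<xi>. (hcomp A \<xi> (ident2 A \<delta>0), hcomp A \<xi> (ident2 A \<delta>1))))"

definition po_obj :: "('o, 'a, 'c, 'z) two_cat_scheme \<Rightarrow> 'a \<Rightarrow> 'a \<Rightarrow> 'o \<Rightarrow> ('a \<times> 'a) set" where
  "po_obj A f0 f1 y = {(k0, k1). k0 \<in> Hom A (tgt1 A f0) y \<and> k1 \<in> Hom A (tgt1 A f1) y \<and>
                          comp1 A k0 f0 = comp1 A k1 f1}"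

definition po_mor :: "('o, 'a, 'c, 'z) two_cat_scheme \<Rightarrow> 'a \<Rightarrow> 'a
    \<Rightarrow> ('a \<times> 'a) \<Rightarrow> ('a \<times> 'a) \<Rightarrow> ('c \<times> 'c) set" where
  "po_mor A f0 f1 K K' = (case K of (k0, k1) \<Rightarrow> case K' of (k0', k1') \<Rightarrow>
     {(\<xi>0, \<xi>1). \<xi>0 \<in> Cell A k0 k0' \<and> \<xi>1 \<in> Cell A k1 k1' \<and>
        hcomp A \<xi>0 (ident2 A f0) = hcomp A \<xi>1 (ident2 A f1)})"

definition is_2pushout :: "('o, 'a, 'c, 'z) two_cat_scheme \<Rightarrow> 'a \<Rightarrow> 'a \<Rightarrow> 'o \<Rightarrow> 'a \<Rightarrow> 'a \<Rightarrow> bool" where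
  "is_2pushout A f0 f1 P q0 q1 \<longleftrightarrow>
     f0 \<in> arr1 A \<and> f1 \<in> arr1 A \<and> src1 A f0 = src1 A f1 \<and>
     P \<in> obj A \<and> q0 \<in> Hom A (tgt1 A f0) P \<and> q1 \<in> Hom A (tgt1 A f1) P \<and>
     comp1 A q0 f0 = comp1 A q1 f1 \<and>
     (\<forall>y \<in> obj A. cat_iso (Hom A P y) (Cell A) (po_obj A f0 f1 y) (po_mor A f0 f1)
        (\<lambda>k. (comp1 A k q0, comp1 A k q1))
        (\<lambda>\<xi>. (hcomp A \<xi> (ident2 A q0), hcomp A \<xi> (ident2 A q1))))"

definition cokernel_diagram :: "('o, 'a, 'c, 'z) two_cat_scheme \<Rightarrow> 'a \<Rightarrow>
    'o \<Rightarrow> 'a \<Rightarrow> 'a \<Rightarrow> 'c \<Rightarrow> 'o \<Rightarrow> 'a \<Rightarrow> 'a \<Rightarrow> 'a \<Rightarrow> 'a \<Rightarrow> bool" where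
  "cokernel_diagram A p C \<delta>0 \<delta>1 \<alpha> P D0 D1 D2 s0 \<longleftrightarrow>
     is_opcomma A p C \<delta>0 \<delta>1 \<alpha> \<and>
     is_2pushout A \<delta>0 \<delta>1 P D2 D0 \<and>
     D1 \<in> Hom A C P \<and>
     comp1 A D1 \<delta>1 = comp1 A D2 \<delta>1 \<and> comp1 A D1 \<delta>0 = comp1 A D0 \<delta>0 \<and>
     hcomp A (ident2 A D1) \<alpha> = vcomp A (hcomp A (ident2 A D0) \<alpha>) (hcomp A (ident2 A D2) \<alpha>) \<and>
     s0 \<in> Hom A C (tgt1 A p) \<and>
     comp1 A s0 \<delta>0 = ident1 A (tgt1 A p) \<and> comp1 A s0 \<delta>1 = ident1 A (tgt1 A p) \<and>
     hcomp A (ident2 A s0) \<alpha> = ident2 A p"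

definition desc_obj :: "('o, 'a, 'c, 'z) two_cat_scheme \<Rightarrow> 'a \<Rightarrow> 'a \<Rightarrow> 'a \<Rightarrow>
    'a \<Rightarrow> 'a \<Rightarrow> 'a \<Rightarrow> 'a \<Rightarrow> 'o \<Rightarrow> ('a \<times> 'c) set" where
  "desc_obj A p \<delta>0 \<delta>1 D0 D1 D2 s0 y = {(h, \<beta>). h \<in> Hom A y (tgt1 A p) \<and>
       \<beta> \<in> Cell A (comp1 A \<delta>1 h) (comp1 A \<delta>0 h) \<and>
       vcomp A (hcomp A (ident2 A D0) \<beta>) (hcomp A (ident2 A D2) \<beta>) = hcomp A (ident2 A D1) \<beta> \<and>
       hcomp A (ident2 A s0) \<beta> = ident2 A h}"

text \<open>Morphisms (h1,beta1) -> (h0,beta0).\<close>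

definition desc_mor :: "('o, 'a, 'c, 'z) two_cat_scheme \<Rightarrow> 'a \<Rightarrow> 'a \<Rightarrow>
    ('a \<times> 'c) \<Rightarrow> ('a \<times> 'c) \<Rightarrow> 'c set" where
  "desc_mor A \<delta>0 \<delta>1 X1 X0 = (case X1 of (h1, \<beta>1) \<Rightarrow> case X0 of (h0, \<beta>0) \<Rightarrow>
     {\<xi> \<in> Cell A h1 h0. vcomp A \<beta>0 (hcomp A (ident2 A \<delta>1) \<xi>) = vcomp A (hcomp A (ident2 A \<delta>0) \<xi>) \<beta>1})"

definition lax_descent_object :: "('o, 'a, 'c, 'z) two_cat_scheme \<Rightarrow> 'a \<Rightarrow> 'a \<Rightarrow> 'a \<Rightarrow>
    'a \<Rightarrow> 'a \<Rightarrow> 'a \<Rightarrow> 'a \<Rightarrow> 'o \<Rightarrow> 'a \<Rightarrow> 'c \<Rightarrow> bool" where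
  "lax_descent_object A p \<delta>0 \<delta>1 D0 D1 D2 s0 L d \<Psi> \<longleftrightarrow>
     L \<in> obj A \<and> d \<in> Hom A L (tgt1 A p) \<and> \<Psi> \<in> Cell A (comp1 A \<delta>1 d) (comp1 A \<delta>0 d) \<and>
     (\<forall>y \<in> obj A. cat_iso (Hom A y L) (Cell A)
        (desc_obj A p \<delta>0 \<delta>1 D0 D1 D2 s0 y) (desc_mor A \<delta>0 \<delta>1)
        (\<lambda>g. (comp1 A d g, hcomp A \<Psi> (ident2 A g)))
        (\<lambda>\<xi>. hcomp A (ident2 A d) \<xi>))"

definition is_right_kan :: "('o, 'a, 'c, 'z) two_cat_scheme \<Rightarrow> 'a \<Rightarrow> 'a \<Rightarrow> 'a \<Rightarrow> 'c \<Rightarrow> bool" where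
  "is_right_kan A f g r \<gamma> \<longleftrightarrow>
     f \<in> arr1 A \<and> g \<in> arr1 A \<and> src1 A f = src1 A g \<and>
     r \<in> Hom A (tgt1 A g) (tgt1 A f) \<and> \<gamma> \<in> Cell A (comp1 A r g) f \<and>
     (\<forall>k \<in> Hom A (tgt1 A g) (tgt1 A f).
        bij_betw (\<lambda>\<beta>. vcomp A \<gamma> (hcomp A \<beta> (ident2 A g))) (Cell A k r) (Cell A (comp1 A k g) f))"

definition preserves_right_kan :: "('o, 'a, 'c, 'z) two_cat_scheme \<Rightarrow> 'a \<Rightarrow> 'a \<Rightarrow> 'a \<Rightarrow> 'a \<Rightarrow> 'c \<Rightarrow> bool" where
  "preserves_right_kan A \<delta> f g r \<gamma> \<longleftrightarrow>
     \<delta> \<in> arr1 A \<and> src1 A \<delta> = tgt1 A f \<and>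
     is_right_kan A (comp1 A \<delta> f) g (comp1 A \<delta> r) (hcomp A (ident2 A \<delta>) \<gamma>)"

text \<open>m and eta of the codensity monad, characterized by their defining equations
(they exist and are unique by the universal property of the Kan extension).\<close>

definition codensity_monad :: "('o, 'a, 'c, 'z) two_cat_scheme \<Rightarrow> 'a \<Rightarrow> 'a \<Rightarrow> 'c \<Rightarrow> 'c \<Rightarrow> 'c \<Rightarrow> bool" where
  "codensity_monad A p t \<gamma> m \<eta> \<longleftrightarrow>
     m \<in> Cell A (comp1 A t t) t \<and>
     vcomp A \<gamma> (hcomp A m (ident2 A p)) = vcomp A \<gamma> (hcomp A (ident2 A t) \<gamma>) \<and>
     \<eta> \<in> Cell A (ident1 A (tgt1 A p)) t \<and>
     vcomp A \<gamma> (hcomp A \<eta> (ident2 A p)) = ident2 A p"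

definition alg_obj :: "('o, 'a, 'c, 'z) two_cat_scheme \<Rightarrow> 'o \<Rightarrow> 'a \<Rightarrow> 'c \<Rightarrow> 'c \<Rightarrow> 'o \<Rightarrow> ('a \<times> 'c) set" where
  "alg_obj A b t m \<eta> y = {(h, \<beta>). h \<in> Hom A y b \<and> \<beta> \<in> Cell A (comp1 A t h) h \<and>
       vcomp A \<beta> (hcomp A (ident2 A t) \<beta>) = vcomp A \<beta> (hcomp A m (ident2 A h)) \<and>
       vcomp A \<beta> (hcomp A \<eta> (ident2 A h)) = ident2 A h}"

definition alg_mor :: "('o, 'a, 'c, 'z) two_cat_scheme \<Rightarrow> 'a \<Rightarrow> ('a \<times> 'c) \<Rightarrow> ('a \<times> 'c) \<Rightarrow> 'c set" where
  "alg_mor A t X1 X0 = (case X1 of (h1, \<beta>1) \<Rightarrow> case X0 of (h0, \<beta>0) \<Rightarrow>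
     {\<xi> \<in> Cell A h1 h0. vcomp A \<xi> \<beta>1 = vcomp A \<beta>0 (hcomp A (ident2 A t) \<xi>)})"

definition em_object :: "('o, 'a, 'c, 'z) two_cat_scheme \<Rightarrow> 'o \<Rightarrow> 'a \<Rightarrow> 'c \<Rightarrow> 'c \<Rightarrow>
    'o \<Rightarrow> 'a \<Rightarrow> 'c \<Rightarrow> bool" where
  "em_object A b t m \<eta> bT u \<mu> \<longleftrightarrow>
     bT \<in> obj A \<and> u \<in> Hom A bT b \<and> \<mu> \<in> Cell A (comp1 A t u) u \<and>
     (\<forall>y \<in> obj A. cat_iso (Hom A y bT) (Cell A) (alg_obj A b t m \<eta> y) (alg_mor A t)
        (\<lambda>g. (comp1 A u g, hcomp A \<mu> (ident2 A g)))
        (\<lambda>\<xi>. hcomp A (ident2 A u) \<xi>))"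

end

theory Submission
  imports Defs
begin

text \<open>
  The opcomma property yields a 1-cell \<open>\<ell> : b\<uparrow>\<^sub>pb \<rightarrow> b\<close> with \<open>\<ell>\<delta>\<^sup>0 = 1\<close>, \<open>\<ell>\<delta>\<^sup>1 = t\<close> and
  \<open>\<ell>\<alpha> = \<gamma>\<close>.  Because \<open>\<delta>\<^sup>0\<close> preserves the Kan extension, \<open>\<alpha>\<close> factors as
  \<open>(\<delta>\<^sup>0\<gamma>)\<cdot>(\<sigma>p)\<close> with \<open>\<sigma> : \<delta>\<^sup>1 \<Rightarrow> \<delta>\<^sup>0t\<close>, and then \<open>\<beta> \<mapsto> \<ell>\<beta>\<close> is a bijection from 2-cells
  \<open>\<delta>\<^sup>1h\<^sub>1 \<Rightarrow> \<delta>\<^sup>0h\<^sub>0\<close> onto 2-cells \<open>th\<^sub>1 \<Rightarrow> h\<^sub>0\<close>, with inverse \<open>a \<mapsto> (\<delta>\<^sup>0a)\<cdot>(\<sigma>h\<^sub>1)\<close>.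
  Whiskering with the 1-cell \<open>b\<uparrow>\<^sub>pb\<uparrow>\<^sub>pb \<rightarrow> b\<close> induced by \<open>t\<ell>\<close> and \<open>\<ell>\<close> turns the descent
  cocycle condition into the associativity law of a \<open>T\<close>-algebra; the normalisation condition
  becomes the unit law and descent morphisms become algebra morphisms.  So
  \<open>Desc\<^sub>p(y) \<cong> Alg\<^sub>T(y)\<close> naturally in \<open>y\<close>, and the two universal objects represent
  isomorphic 2-functors; by Yoneda each exists iff the other does, and they agree up to
  isomorphism compatibly with \<open>p\<close>.
\<close>

lemma cat_iso_transfer_objects:
  assumes iso: "cat_iso O1 H1 O2 H2 F0 F1"
    and \<Phi>: "bij_betw \<Phi> O2 O3"
    and hom: "\<And>X X'. X \<in> O2 \<Longrightarrow> X' \<in> O2 \<Longrightarrow> H3 (\<Phi> X) (\<Phi> X') = H2 X X'"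
    and G0: "\<And>x. x \<in> O1 \<Longrightarrow> G0 x = \<Phi> (F0 x)"
  shows "cat_iso O1 H1 O3 H3 G0 F1"
proof -
  have F0: "bij_betw F0 O1 O2" using iso unfolding cat_iso_def by blast
  have "bij_betw G0 O1 O3 \<longleftrightarrow> bij_betw (\<Phi> \<circ> F0) O1 O3"
    by (rule bij_betw_cong) (simp add: G0)
  then have "bij_betw G0 O1 O3" using bij_betw_trans[OF F0 \<Phi>] by blast
  moreover have "F0 x \<in> O2" if "x \<in> O1" for x
    using F0 that unfolding bij_betw_def by blast
  moreover have "bij_betw F1 (H1 x x') (H3 (G0 x) (G0 x'))" if "x \<in> O1" "x' \<in> O1" for x x'
    using iso that unfolding cat_iso_def by (simp add: G0 hom calculation(2))
  ultimately show ?thesis unfolding cat_iso_def by blast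
qed

lemma opcomma_induced_1cell:
  assumes "is_opcomma A p C \<delta>0 \<delta>1 \<alpha>" "y \<in> obj A"
    and "h0 \<in> Hom A (tgt1 A p) y" "h1 \<in> Hom A (tgt1 A p) y"
    and "\<beta> \<in> Cell A (comp1 A h1 p) (comp1 A h0 p)"
  shows "\<exists>h \<in> Hom A C y. comp1 A h \<delta>0 = h0 \<and> comp1 A h \<delta>1 = h1 \<and> hcomp A (ident2 A h) \<alpha> = \<beta>"
proof -
  have "bij_betw (\<lambda>h. (comp1 A h \<delta>0, comp1 A h \<delta>1, hcomp A (ident2 A h) \<alpha>)) (Hom A C y) (opc_obj A p y)"
    using assms(1,2) unfolding is_opcomma_def cat_iso_def by blast
  moreover have "(h0, h1, \<beta>) \<in> opc_obj A p y" using assms unfolding opc_obj_def by auto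
  ultimately obtain h where "h \<in> Hom A C y"
      "(comp1 A h \<delta>0, comp1 A h \<delta>1, hcomp A (ident2 A h) \<alpha>) = (h0, h1, \<beta>)"
    unfolding bij_betw_def by (metis (no_types, lifting) imageE)
  then show ?thesis by auto
qed

lemma opcomma_induced_2cell:
  assumes "is_opcomma A p C \<delta>0 \<delta>1 \<alpha>" "y \<in> obj A" "k \<in> Hom A C y" "k' \<in> Hom A C y"
    and "\<xi>0 \<in> Cell A (comp1 A k \<delta>0) (comp1 A k' \<delta>0)" "\<xi>1 \<in> Cell A (comp1 A k \<delta>1) (comp1 A k' \<delta>1)"
    and "vcomp A (hcomp A \<xi>0 (ident2 A p)) (hcomp A (ident2 A k) \<alpha>)
       = vcomp A (hcomp A (ident2 A k') \<alpha>) (hcomp A \<xi>1 (ident2 A p))"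
  shows "\<exists>\<xi> \<in> Cell A k k'. hcomp A \<xi> (ident2 A \<delta>0) = \<xi>0 \<and> hcomp A \<xi> (ident2 A \<delta>1) = \<xi>1"
proof -
  let ?X = "\<lambda>k. (comp1 A k \<delta>0, comp1 A k \<delta>1, hcomp A (ident2 A k) \<alpha>)"
  have "bij_betw (\<lambda>\<xi>. (hcomp A \<xi> (ident2 A \<delta>0), hcomp A \<xi> (ident2 A \<delta>1))) (Cell A k k')
     (opc_mor A p (?X k) (?X k'))"
    using assms(1-4) unfolding is_opcomma_def cat_iso_def by blast
  moreover have "(\<xi>0, \<xi>1) \<in> opc_mor A p (?X k) (?X k')"
    using assms unfolding opc_mor_def by auto
  ultimately obtain \<xi> where "\<xi> \<in> Cell A k k'"
      "(hcomp A \<xi> (ident2 A \<delta>0), hcomp A \<xi> (ident2 A \<delta>1)) = (\<xi>0, \<xi>1)"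
    unfolding bij_betw_def by (metis (no_types, lifting) imageE)
  then show ?thesis by auto
qed

lemma pushout_induced_1cell:
  assumes "is_2pushout A f0 f1 P q0 q1" "y \<in> obj A"
    and "k0 \<in> Hom A (tgt1 A f0) y" "k1 \<in> Hom A (tgt1 A f1) y" "comp1 A k0 f0 = comp1 A k1 f1"
  shows "\<exists>k \<in> Hom A P y. comp1 A k q0 = k0 \<and> comp1 A k q1 = k1"
proof -
  have "bij_betw (\<lambda>k. (comp1 A k q0, comp1 A k q1)) (Hom A P y) (po_obj A f0 f1 y)"
    using assms(1,2) unfolding is_2pushout_def cat_iso_def by blast
  moreover have "(k0, k1) \<in> po_obj A f0 f1 y" using assms unfolding po_obj_def by auto
  ultimately obtain k where "k \<in> Hom A P y" "(comp1 A k q0, comp1 A k q1) = (k0, k1)"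
    unfolding bij_betw_def by (metis (no_types, lifting) imageE)
  then show ?thesis by auto
qed

lemma pushout_induced_2cell:
  assumes "is_2pushout A f0 f1 P q0 q1" "y \<in> obj A" "k \<in> Hom A P y" "k' \<in> Hom A P y"
    and "\<xi>0 \<in> Cell A (comp1 A k q0) (comp1 A k' q0)" "\<xi>1 \<in> Cell A (comp1 A k q1) (comp1 A k' q1)"
    and "hcomp A \<xi>0 (ident2 A f0) = hcomp A \<xi>1 (ident2 A f1)"
  shows "\<exists>\<xi> \<in> Cell A k k'. hcomp A \<xi> (ident2 A q0) = \<xi>0 \<and> hcomp A \<xi> (ident2 A q1) = \<xi>1"
proof -
  have "bij_betw (\<lambda>\<xi>. (hcomp A \<xi> (ident2 A q0), hcomp A \<xi> (ident2 A q1))) (Cell A k k')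
     (po_mor A f0 f1 (comp1 A k q0, comp1 A k q1) (comp1 A k' q0, comp1 A k' q1))"
    using assms(1-4) unfolding is_2pushout_def cat_iso_def by blast
  moreover have "(\<xi>0, \<xi>1) \<in> po_mor A f0 f1 (comp1 A k q0, comp1 A k q1) (comp1 A k' q0, comp1 A k' q1)"
    using assms unfolding po_mor_def by auto
  ultimately obtain \<xi> where "\<xi> \<in> Cell A k k'"
      "(hcomp A \<xi> (ident2 A q0), hcomp A \<xi> (ident2 A q1)) = (\<xi>0, \<xi>1)"
    unfolding bij_betw_def by (metis (no_types, lifting) imageE)
  then show ?thesis by auto
qed

lemma right_kan_cell_unique:
  assumes "is_right_kan A f g r \<gamma>" "k \<in> Hom A (tgt1 A g) (tgt1 A f)"
    and "x \<in> Cell A k r" "x' \<in> Cell A k r"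
    and "vcomp A \<gamma> (hcomp A x (ident2 A g)) = vcomp A \<gamma> (hcomp A x' (ident2 A g))"
  shows "x = x'"
  using assms unfolding is_right_kan_def bij_betw_def inj_on_def by blast

lemma right_kan_cell_exists:
  assumes "is_right_kan A f g r \<gamma>" "k \<in> Hom A (tgt1 A g) (tgt1 A f)"
    and "a \<in> Cell A (comp1 A k g) f"
  shows "\<exists>x \<in> Cell A k r. vcomp A \<gamma> (hcomp A x (ident2 A g)) = a"
proof -
  have "bij_betw (\<lambda>x. vcomp A \<gamma> (hcomp A x (ident2 A g))) (Cell A k r) (Cell A (comp1 A k g) f)"
    using assms(1,2) unfolding is_right_kan_def by blast
  then show ?thesis using assms(3) unfolding bij_betw_def by (metis (no_types, lifting) imageE)
qed

definition reindex :: "('o, 'a, 'c, 'z) two_cat_scheme \<Rightarrow> 'a \<Rightarrow> 'a \<times> 'c \<Rightarrow> 'a \<times> 'c" where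
  "reindex A g X = (case X of (h, \<beta>) \<Rightarrow> (comp1 A h g, hcomp A \<beta> (ident2 A g)))"

locale strict_two_category =
  fixes A :: "('o, 'a, 'c, 'z) two_cat_scheme"
  assumes two_cat_ax: "two_category A"
begin

abbreviation "c1 \<equiv> comp1 A"
abbreviation "i1 \<equiv> ident1 A"
abbreviation "vc \<equiv> vcomp A"
abbreviation "hc \<equiv> hcomp A"
abbreviation "i2 \<equiv> ident2 A"

lemma Hom_iff: "f \<in> Hom A x y \<longleftrightarrow> f \<in> arr1 A \<and> src1 A f = x \<and> tgt1 A f = y"
  by (simp add: Hom_def)

lemma Cell_iff: "a \<in> Cell A f g \<longleftrightarrow> a \<in> arr2 A \<and> src2 A a = f \<and> tgt2 A a = g"
  by (simp add: Cell_def)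

lemma ax_obj:
  "\<forall>f \<in> arr1 A. src1 A f \<in> obj A \<and> tgt1 A f \<in> obj A"
  using two_cat_ax unfolding two_category_def by (elim conjE) assumption

lemma ax_ident1:
  "\<forall>x \<in> obj A. ident1 A x \<in> Hom A x x"
  using two_cat_ax unfolding two_category_def by (elim conjE) assumption

lemma ax_comp1:
  "\<forall>f \<in> arr1 A. \<forall>g \<in> arr1 A. tgt1 A f = src1 A g \<longrightarrow>
          comp1 A g f \<in> Hom A (src1 A f) (tgt1 A g)"
  using two_cat_ax unfolding two_category_def by (elim conjE) assumption

lemma ax_comp1_assoc:
  "\<forall>f \<in> arr1 A. \<forall>g \<in> arr1 A. \<forall>h \<in> arr1 A.
          tgt1 A f = src1 A g \<longrightarrow> tgt1 A g = src1 A h \<longrightarrow>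
          comp1 A h (comp1 A g f) = comp1 A (comp1 A h g) f"
  using two_cat_ax unfolding two_category_def by (elim conjE) assumption

lemma ax_comp1_ident:
  "\<forall>f \<in> arr1 A. comp1 A (ident1 A (tgt1 A f)) f = f \<and>
                    comp1 A f (ident1 A (src1 A f)) = f"
  using two_cat_ax unfolding two_category_def by (elim conjE) assumption

lemma ax_arr2:
  "\<forall>\<alpha> \<in> arr2 A. src2 A \<alpha> \<in> arr1 A \<and> tgt2 A \<alpha> \<in> arr1 A \<and>
          src1 A (src2 A \<alpha>) = src1 A (tgt2 A \<alpha>) \<and>
          tgt1 A (src2 A \<alpha>) = tgt1 A (tgt2 A \<alpha>)"
  using two_cat_ax unfolding two_category_def by (elim conjE) assumption

lemma ax_ident2:
  "\<forall>f \<in> arr1 A. ident2 A f \<in> Cell A f f"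
  using two_cat_ax unfolding two_category_def by (elim conjE) assumption

lemma ax_vcomp:
  "\<forall>\<alpha> \<in> arr2 A. \<forall>\<beta> \<in> arr2 A. tgt2 A \<alpha> = src2 A \<beta> \<longrightarrow>
          vcomp A \<beta> \<alpha> \<in> Cell A (src2 A \<alpha>) (tgt2 A \<beta>)"
  using two_cat_ax unfolding two_category_def by (elim conjE) assumption

lemma ax_vcomp_ident:
  "\<forall>\<alpha> \<in> arr2 A. vcomp A (ident2 A (tgt2 A \<alpha>)) \<alpha> = \<alpha> \<and>
                    vcomp A \<alpha> (ident2 A (src2 A \<alpha>)) = \<alpha>"
  using two_cat_ax unfolding two_category_def by (elim conjE) assumption

lemma ax_hcomp:
  "\<forall>\<alpha> \<in> arr2 A. \<forall>\<beta> \<in> arr2 A. tgt1 A (src2 A \<alpha>) = src1 A (src2 A \<beta>) \<longrightarrow>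
          hcomp A \<beta> \<alpha> \<in> Cell A (comp1 A (src2 A \<beta>) (src2 A \<alpha>))
                                 (comp1 A (tgt2 A \<beta>) (tgt2 A \<alpha>))"
  using two_cat_ax unfolding two_category_def by (elim conjE) assumption

lemma ax_hcomp_ident2:
  "\<forall>f \<in> arr1 A. \<forall>g \<in> arr1 A. tgt1 A f = src1 A g \<longrightarrow>
          hcomp A (ident2 A g) (ident2 A f) = ident2 A (comp1 A g f)"
  using two_cat_ax unfolding two_category_def by (elim conjE) assumption

lemma ax_interchange:
  "\<forall>\<alpha> \<in> arr2 A. \<forall>\<alpha>' \<in> arr2 A. \<forall>\<beta> \<in> arr2 A. \<forall>\<beta>' \<in> arr2 A.
          tgt2 A \<alpha> = src2 A \<alpha>' \<longrightarrow> tgt2 A \<beta> = src2 A \<beta>' \<longrightarrow>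
          tgt1 A (src2 A \<alpha>) = src1 A (src2 A \<beta>) \<longrightarrow>
          hcomp A (vcomp A \<beta>' \<beta>) (vcomp A \<alpha>' \<alpha>) =
          vcomp A (hcomp A \<beta>' \<alpha>') (hcomp A \<beta> \<alpha>)"
  using two_cat_ax unfolding two_category_def by (elim conjE) assumption

lemma ax_hcomp_assoc:
  "\<forall>\<alpha> \<in> arr2 A. \<forall>\<beta> \<in> arr2 A. \<forall>\<gamma> \<in> arr2 A.
          tgt1 A (src2 A \<alpha>) = src1 A (src2 A \<beta>) \<longrightarrow>
          tgt1 A (src2 A \<beta>) = src1 A (src2 A \<gamma>) \<longrightarrow>
          hcomp A \<gamma> (hcomp A \<beta> \<alpha>) = hcomp A (hcomp A \<gamma> \<beta>) \<alpha>"
  using two_cat_ax unfolding two_category_def by (elim conjE) assumption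

lemma ax_hcomp_ident:
  "\<forall>\<alpha> \<in> arr2 A. hcomp A (ident2 A (ident1 A (tgt1 A (src2 A \<alpha>)))) \<alpha> = \<alpha> \<and>
                    hcomp A \<alpha> (ident2 A (ident1 A (src1 A (src2 A \<alpha>)))) = \<alpha>"
  using two_cat_ax unfolding two_category_def by (elim conjE) assumption

lemma src1_obj [simp]: "f \<in> arr1 A \<Longrightarrow> src1 A f \<in> obj A"
  and tgt1_obj [simp]: "f \<in> arr1 A \<Longrightarrow> tgt1 A f \<in> obj A"
  using ax_obj by auto

lemma ident1_typing [simp]: "x \<in> obj A \<Longrightarrow> i1 x \<in> arr1 A"
  "x \<in> obj A \<Longrightarrow> src1 A (i1 x) = x" "x \<in> obj A \<Longrightarrow> tgt1 A (i1 x) = x"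
  using ax_ident1 unfolding Hom_def by auto

lemma comp1_typing [simp]:
  assumes "f \<in> arr1 A" "g \<in> arr1 A" "tgt1 A f = src1 A g"
  shows "c1 g f \<in> arr1 A" "src1 A (c1 g f) = src1 A f" "tgt1 A (c1 g f) = tgt1 A g"
  using ax_comp1 assms unfolding Hom_def by auto

lemma comp1_assoc:
  assumes "f \<in> arr1 A" "g \<in> arr1 A" "h \<in> arr1 A" "tgt1 A f = src1 A g" "tgt1 A g = src1 A h"
  shows "c1 (c1 h g) f = c1 h (c1 g f)"
  using ax_comp1_assoc assms by simp

lemma comp1_ident_left [simp]: "f \<in> arr1 A \<Longrightarrow> tgt1 A f = x \<Longrightarrow> c1 (i1 x) f = f"
  and comp1_ident_right [simp]: "f \<in> arr1 A \<Longrightarrow> src1 A f = x \<Longrightarrow> c1 f (i1 x) = f"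
  using ax_comp1_ident by auto

lemma arr2_typing [simp]:
  assumes "a \<in> arr2 A"
  shows "src2 A a \<in> arr1 A" "tgt2 A a \<in> arr1 A"
    "src1 A (tgt2 A a) = src1 A (src2 A a)" "tgt1 A (tgt2 A a) = tgt1 A (src2 A a)"
  using ax_arr2 assms by auto

lemma ident2_typing [simp]: "f \<in> arr1 A \<Longrightarrow> i2 f \<in> arr2 A"
  "f \<in> arr1 A \<Longrightarrow> src2 A (i2 f) = f" "f \<in> arr1 A \<Longrightarrow> tgt2 A (i2 f) = f"
  using ax_ident2 unfolding Cell_def by auto

lemma vcomp_typing [simp]:
  assumes "a \<in> arr2 A" "b \<in> arr2 A" "tgt2 A a = src2 A b"
  shows "vc b a \<in> arr2 A" "src2 A (vc b a) = src2 A a" "tgt2 A (vc b a) = tgt2 A b"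
  using ax_vcomp assms unfolding Cell_def by auto

lemma hcomp_typing [simp]:
  assumes "a \<in> arr2 A" "b \<in> arr2 A" "tgt1 A (src2 A a) = src1 A (src2 A b)"
  shows "hc b a \<in> arr2 A" "src2 A (hc b a) = c1 (src2 A b) (src2 A a)"
    "tgt2 A (hc b a) = c1 (tgt2 A b) (tgt2 A a)"
  using ax_hcomp assms unfolding Cell_def by auto

lemma vcomp_ident_left [simp]: "a \<in> arr2 A \<Longrightarrow> tgt2 A a = f \<Longrightarrow> vc (i2 f) a = a"
  and vcomp_ident_right [simp]: "a \<in> arr2 A \<Longrightarrow> src2 A a = f \<Longrightarrow> vc a (i2 f) = a"
  using ax_vcomp_ident by auto

lemma hcomp_ident2 [simp]: "f \<in> arr1 A \<Longrightarrow> g \<in> arr1 A \<Longrightarrow> tgt1 A f = src1 A g \<Longrightarrow>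
    hc (i2 g) (i2 f) = i2 (c1 g f)"
  using ax_hcomp_ident2 by auto

lemma interchange:
  assumes "a \<in> arr2 A" "b \<in> arr2 A" "a' \<in> arr2 A" "b' \<in> arr2 A"
    "tgt2 A a = src2 A a'" "tgt2 A b = src2 A b'" "tgt1 A (src2 A a) = src1 A (src2 A b)"
  shows "hc (vc b' b) (vc a' a) = vc (hc b' a') (hc b a)"
  using ax_interchange assms by simp

lemma hcomp_assoc:
  assumes "a \<in> arr2 A" "b \<in> arr2 A" "c \<in> arr2 A"
    "tgt1 A (src2 A a) = src1 A (src2 A b)" "tgt1 A (src2 A b) = src1 A (src2 A c)"
  shows "hc c (hc b a) = hc (hc c b) a"
  using ax_hcomp_assoc assms by simp

lemma hcomp_ident_left [simp]: "a \<in> arr2 A \<Longrightarrow> tgt1 A (src2 A a) = x \<Longrightarrow> hc (i2 (i1 x)) a = a"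
  and hcomp_ident_right [simp]: "a \<in> arr2 A \<Longrightarrow> src1 A (src2 A a) = x \<Longrightarrow> hc a (i2 (i1 x)) = a"
  using ax_hcomp_ident by auto

lemma hcomp_as_vcomp_whiskers:
  assumes "a \<in> arr2 A" "b \<in> arr2 A" "tgt1 A (src2 A a) = src1 A (src2 A b)"
  shows "hc b a = vc (hc b (i2 (tgt2 A a))) (hc (i2 (src2 A b)) a)"
proof -
  have "hc b a = hc (vc b (i2 (src2 A b))) (vc (i2 (tgt2 A a)) a)" using assms by simp
  also have "\<dots> = vc (hc b (i2 (tgt2 A a))) (hc (i2 (src2 A b)) a)"
    using assms by (subst interchange) auto
  finally show ?thesis .
qed

lemma hcomp_as_vcomp_whiskers':
  assumes "a \<in> arr2 A" "b \<in> arr2 A" "tgt1 A (src2 A a) = src1 A (src2 A b)"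
  shows "hc b a = vc (hc (i2 (tgt2 A b)) a) (hc b (i2 (src2 A a)))"
proof -
  have "hc b a = hc (vc (i2 (tgt2 A b)) b) (vc a (i2 (src2 A a)))" using assms by simp
  also have "\<dots> = vc (hc (i2 (tgt2 A b)) a) (hc b (i2 (src2 A a)))"
    using assms by (subst interchange) auto
  finally show ?thesis .
qed

lemma whisker_left_vcomp:
  assumes "a \<in> arr2 A" "b \<in> arr2 A" "tgt2 A a = src2 A b" "k \<in> arr1 A" "tgt1 A (src2 A a) = src1 A k"
  shows "hc (i2 k) (vc b a) = vc (hc (i2 k) b) (hc (i2 k) a)"
proof -
  have "hc (i2 k) (vc b a) = hc (vc (i2 k) (i2 k)) (vc b a)" using assms by simp
  also have "\<dots> = vc (hc (i2 k) b) (hc (i2 k) a)" using assms by (subst interchange) auto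
  finally show ?thesis .
qed

lemma whisker_right_vcomp:
  assumes "a \<in> arr2 A" "b \<in> arr2 A" "tgt2 A a = src2 A b" "k \<in> arr1 A" "tgt1 A k = src1 A (src2 A a)"
  shows "hc (vc b a) (i2 k) = vc (hc b (i2 k)) (hc a (i2 k))"
proof -
  have "hc (vc b a) (i2 k) = hc (vc b a) (vc (i2 k) (i2 k))" using assms by simp
  also have "\<dots> = vc (hc b (i2 k)) (hc a (i2 k))" using assms by (subst interchange) auto
  finally show ?thesis .
qed

lemma whisker_left_comp1:
  assumes "a \<in> arr2 A" "j \<in> arr1 A" "k \<in> arr1 A" "tgt1 A (src2 A a) = src1 A j" "tgt1 A j = src1 A k"
  shows "hc (i2 k) (hc (i2 j) a) = hc (i2 (c1 k j)) a"
  using assms by (subst hcomp_assoc) auto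

lemma whisker_right_comp1:
  assumes "a \<in> arr2 A" "j \<in> arr1 A" "k \<in> arr1 A" "tgt1 A k = src1 A j" "tgt1 A j = src1 A (src2 A a)"
  shows "hc (hc a (i2 j)) (i2 k) = hc a (i2 (c1 j k))"
  using assms hcomp_assoc[of "i2 k" "i2 j" a] by simp

lemma whisker_left_right_assoc:
  assumes "a \<in> arr2 A" "j \<in> arr1 A" "k \<in> arr1 A" "tgt1 A j = src1 A (src2 A a)" "tgt1 A (src2 A a) = src1 A k"
  shows "hc (hc (i2 k) a) (i2 j) = hc (i2 k) (hc a (i2 j))"
  using assms by (subst hcomp_assoc) auto

lemma reindex_ident:
  assumes "h \<in> arr1 A" "\<beta> \<in> arr2 A" "src1 A h = x" "src1 A (src2 A \<beta>) = x"
  shows "reindex A (i1 x) (h, \<beta>) = (h, \<beta>)"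
  using assms by (simp add: reindex_def)

lemma reindex_comp1:
  assumes "h \<in> arr1 A" "\<beta> \<in> arr2 A" "g \<in> arr1 A" "k \<in> arr1 A"
    and "src1 A h = tgt1 A g" "src1 A (src2 A \<beta>) = tgt1 A g" "src1 A g = tgt1 A k"
  shows "reindex A (c1 g k) (h, \<beta>) = reindex A k (reindex A g (h, \<beta>))"
  using assms by (simp add: reindex_def whisker_right_comp1 comp1_assoc)

text \<open>The uniqueness part of the Yoneda lemma, for representations by universal elements.\<close>

lemma representing_objects_iso:
  assumes L: "L \<in> obj A" and L': "L' \<in> obj A"
    and rep: "\<And>y. y \<in> obj A \<Longrightarrow> bij_betw (\<lambda>g. reindex A g (h, \<beta>)) (Hom A y L) (S y)"
    and rep': "\<And>y. y \<in> obj A \<Longrightarrow> bij_betw (\<lambda>g. reindex A g (h', \<beta>')) (Hom A y L') (S y)"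
    and X: "h \<in> arr1 A" "\<beta> \<in> arr2 A" "src1 A h = L" "src1 A (src2 A \<beta>) = L"
    and X': "h' \<in> arr1 A" "\<beta>' \<in> arr2 A" "src1 A h' = L'" "src1 A (src2 A \<beta>') = L'"
  shows "\<exists>\<phi>. iso1 A \<phi> L L' \<and> reindex A \<phi> (h', \<beta>') = (h, \<beta>)"
proof -
  have "i1 L \<in> Hom A L L" "i1 L' \<in> Hom A L' L'" using L L' by (simp_all add: Hom_iff)
  then have "reindex A (i1 L) (h, \<beta>) \<in> S L" "reindex A (i1 L') (h', \<beta>') \<in> S L'"
    using rep[OF L] rep'[OF L'] unfolding bij_betw_def by blast+
  then have in_S: "(h, \<beta>) \<in> S L" "(h', \<beta>') \<in> S L'"
    by (simp_all only: reindex_ident[OF X] reindex_ident[OF X'])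
  have "(h, \<beta>) \<in> (\<lambda>g. reindex A g (h', \<beta>')) ` Hom A L L'"
    using rep'[OF L] in_S(1) unfolding bij_betw_def by blast
  then obtain \<phi> where \<phi>: "(h, \<beta>) = reindex A \<phi> (h', \<beta>')" "\<phi> \<in> Hom A L L'"
    by (rule imageE)
  have "(h', \<beta>') \<in> (\<lambda>g. reindex A g (h, \<beta>)) ` Hom A L' L"
    using rep[OF L'] in_S(2) unfolding bij_betw_def by blast
  then obtain \<psi> where \<psi>: "(h', \<beta>') = reindex A \<psi> (h, \<beta>)" "\<psi> \<in> Hom A L' L"
    by (rule imageE)
  have "reindex A (c1 \<phi> \<psi>) (h', \<beta>') = reindex A \<psi> (reindex A \<phi> (h', \<beta>'))"
    by (rule reindex_comp1) (use \<phi>(2) \<psi>(2) X' in \<open>auto simp: Hom_iff\<close>)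
  also have "\<dots> = reindex A (i1 L') (h', \<beta>')"
    unfolding reindex_ident[OF X'] using \<phi>(1) \<psi>(1) by simp
  finally have \<phi>\<psi>: "c1 \<phi> \<psi> = i1 L'"
    by (rule inj_onD[OF bij_betw_imp_inj_on[OF rep'[OF L']]])
      (use \<phi>(2) \<psi>(2) L' in \<open>auto simp: Hom_iff\<close>)
  have "reindex A (c1 \<psi> \<phi>) (h, \<beta>) = reindex A \<phi> (reindex A \<psi> (h, \<beta>))"
    by (rule reindex_comp1) (use \<phi>(2) \<psi>(2) X in \<open>auto simp: Hom_iff\<close>)
  also have "\<dots> = reindex A (i1 L) (h, \<beta>)"
    unfolding reindex_ident[OF X] using \<phi>(1) \<psi>(1) by simp
  finally have \<psi>\<phi>: "c1 \<psi> \<phi> = i1 L"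
    by (rule inj_onD[OF bij_betw_imp_inj_on[OF rep[OF L]]])
      (use \<phi>(2) \<psi>(2) L in \<open>auto simp: Hom_iff\<close>)
  have "iso1 A \<phi> L L'" unfolding iso1_def using \<phi>(2) \<psi>(2) \<phi>\<psi> \<psi>\<phi> by blast
  with \<phi>(1) show ?thesis by auto
qed

end

declare (in strict_two_category) comp1_assoc [simp]

locale codensity_setting = strict_two_category +
  fixes p C \<delta>0 \<delta>1 \<alpha> P D0 D1 D2 s0 t \<gamma> m \<eta>
  assumes p_arr: "p \<in> arr1 A"
    and cokernel: "cokernel_diagram A p C \<delta>0 \<delta>1 \<alpha> P D0 D1 D2 s0"
    and kan: "is_right_kan A p p t \<gamma>"
    and kan_preserved: "preserves_right_kan A \<delta>0 p p t \<gamma>"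
    and codensity: "codensity_monad A p t \<gamma> m \<eta>"
begin

abbreviation "b \<equiv> tgt1 A p"

lemma opcomma: "is_opcomma A p C \<delta>0 \<delta>1 \<alpha>"
  and pushout: "is_2pushout A \<delta>0 \<delta>1 P D2 D0"
  using cokernel unfolding cokernel_diagram_def by blast+

lemma setting_typing [simp]:
  "p \<in> arr1 A" "b \<in> obj A" "src1 A p \<in> obj A"
  "C \<in> obj A" "\<delta>0 \<in> arr1 A" "src1 A \<delta>0 = b" "tgt1 A \<delta>0 = C"
  "\<delta>1 \<in> arr1 A" "src1 A \<delta>1 = b" "tgt1 A \<delta>1 = C"
  "\<alpha> \<in> arr2 A" "src2 A \<alpha> = c1 \<delta>1 p" "tgt2 A \<alpha> = c1 \<delta>0 p"
  "P \<in> obj A" "D0 \<in> arr1 A" "src1 A D0 = C" "tgt1 A D0 = P"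
  "D1 \<in> arr1 A" "src1 A D1 = C" "tgt1 A D1 = P"
  "D2 \<in> arr1 A" "src1 A D2 = C" "tgt1 A D2 = P"
  "s0 \<in> arr1 A" "src1 A s0 = C" "tgt1 A s0 = b"
  "t \<in> arr1 A" "src1 A t = b" "tgt1 A t = b"
  "\<gamma> \<in> arr2 A" "src2 A \<gamma> = c1 t p" "tgt2 A \<gamma> = p"
  "m \<in> arr2 A" "src2 A m = c1 t t" "tgt2 A m = t"
  "\<eta> \<in> arr2 A" "src2 A \<eta> = i1 b" "tgt2 A \<eta> = t"
  using p_arr opcomma pushout cokernel kan codensity
  unfolding is_opcomma_def is_2pushout_def cokernel_diagram_def is_right_kan_def
    codensity_monad_def Hom_def Cell_def
  by auto

lemma cokernel_comp1_eqs [simp]: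
  "c1 D2 \<delta>0 = c1 D0 \<delta>1" "c1 D1 \<delta>1 = c1 D2 \<delta>1" "c1 D1 \<delta>0 = c1 D0 \<delta>0"
  "c1 s0 \<delta>0 = i1 b" "c1 s0 \<delta>1 = i1 b"
  using cokernel unfolding cokernel_diagram_def is_2pushout_def by auto

lemma cokernel_2cell_eqs:
  "hc (i2 D1) \<alpha> = vc (hc (i2 D0) \<alpha>) (hc (i2 D2) \<alpha>)" "hc (i2 s0) \<alpha> = i2 p"
  using cokernel unfolding cokernel_diagram_def by auto

lemma codensity_eqs:
  "vc \<gamma> (hc m (i2 p)) = vc \<gamma> (hc (i2 t) \<gamma>)" "vc \<gamma> (hc \<eta> (i2 p)) = i2 p"
  using codensity unfolding codensity_monad_def by auto

lemma cokernel_comp1_eqs_assoc [simp]: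
  "x \<in> arr1 A \<Longrightarrow> tgt1 A x = b \<Longrightarrow> c1 D2 (c1 \<delta>0 x) = c1 D0 (c1 \<delta>1 x)"
  "x \<in> arr1 A \<Longrightarrow> tgt1 A x = b \<Longrightarrow> c1 D1 (c1 \<delta>1 x) = c1 D2 (c1 \<delta>1 x)"
  "x \<in> arr1 A \<Longrightarrow> tgt1 A x = b \<Longrightarrow> c1 D1 (c1 \<delta>0 x) = c1 D0 (c1 \<delta>0 x)"
  "x \<in> arr1 A \<Longrightarrow> tgt1 A x = b \<Longrightarrow> c1 s0 (c1 \<delta>0 x) = x"
  "x \<in> arr1 A \<Longrightarrow> tgt1 A x = b \<Longrightarrow> c1 s0 (c1 \<delta>1 x) = x"
  using cokernel_comp1_eqs comp1_assoc[of x \<delta>0 D2] comp1_assoc[of x \<delta>1 D0]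
    comp1_assoc[of x \<delta>1 D1] comp1_assoc[of x \<delta>1 D2] comp1_assoc[of x \<delta>0 D1]
    comp1_assoc[of x \<delta>0 D0] comp1_assoc[of x \<delta>0 s0] comp1_assoc[of x \<delta>1 s0]
  by (auto simp del: comp1_assoc)

lemma preserved_kan: "is_right_kan A (c1 \<delta>0 p) p (c1 \<delta>0 t) (hc (i2 \<delta>0) \<gamma>)"
  using kan_preserved unfolding preserves_right_kan_def by blast

definition "ell = (SOME h. h \<in> Hom A C b \<and> c1 h \<delta>0 = i1 b \<and> c1 h \<delta>1 = t \<and> hc (i2 h) \<alpha> = \<gamma>)"

lemma ell: "ell \<in> Hom A C b \<and> c1 ell \<delta>0 = i1 b \<and> c1 ell \<delta>1 = t \<and> hc (i2 ell) \<alpha> = \<gamma>"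
proof -
  have "\<exists>h \<in> Hom A C b. c1 h \<delta>0 = i1 b \<and> c1 h \<delta>1 = t \<and> hc (i2 h) \<alpha> = \<gamma>"
    by (rule opcomma_induced_1cell[OF opcomma]) (auto simp: Hom_iff Cell_iff)
  then show ?thesis unfolding ell_def by (rule someI2_bex) blast
qed

lemma ell_typing [simp]: "ell \<in> arr1 A" "src1 A ell = C" "tgt1 A ell = b"
  "c1 ell \<delta>0 = i1 b" "c1 ell \<delta>1 = t" "hc (i2 ell) \<alpha> = \<gamma>"
  using ell by (auto simp: Hom_iff)

lemma ell_comp1_assoc [simp]: "x \<in> arr1 A \<Longrightarrow> tgt1 A x = b \<Longrightarrow> c1 ell (c1 \<delta>0 x) = x"
  "x \<in> arr1 A \<Longrightarrow> tgt1 A x = b \<Longrightarrow> c1 ell (c1 \<delta>1 x) = c1 t x"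
  using comp1_assoc[of x \<delta>0 ell] comp1_assoc[of x \<delta>1 ell] by (auto simp del: comp1_assoc)

definition "sigma = (SOME x. x \<in> Cell A \<delta>1 (c1 \<delta>0 t) \<and> vc (hc (i2 \<delta>0) \<gamma>) (hc x (i2 p)) = \<alpha>)"

lemma sigma: "sigma \<in> Cell A \<delta>1 (c1 \<delta>0 t) \<and> vc (hc (i2 \<delta>0) \<gamma>) (hc sigma (i2 p)) = \<alpha>"
proof -
  have "\<exists>x \<in> Cell A \<delta>1 (c1 \<delta>0 t). vc (hc (i2 \<delta>0) \<gamma>) (hc x (i2 p)) = \<alpha>"
    by (rule right_kan_cell_exists[OF preserved_kan]) (auto simp: Hom_iff Cell_iff)
  then show ?thesis unfolding sigma_def by (rule someI2_bex) blast
qed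

lemma sigma_typing [simp]: "sigma \<in> arr2 A" "src2 A sigma = \<delta>1" "tgt2 A sigma = c1 \<delta>0 t"
  using sigma by (auto simp: Cell_iff)

lemma sigma_factorization: "vc (hc (i2 \<delta>0) \<gamma>) (hc sigma (i2 p)) = \<alpha>" using sigma by blast

lemma ell_sigma [simp]: "hc (i2 ell) sigma = i2 t"
proof (rule right_kan_cell_unique[OF kan, where k = t])
  show "t \<in> Hom A b b" "hc (i2 ell) sigma \<in> Cell A t t" "i2 t \<in> Cell A t t"
    by (auto simp: Hom_iff Cell_iff)
  have "\<gamma> = hc (i2 ell) (vc (hc (i2 \<delta>0) \<gamma>) (hc sigma (i2 p)))" using sigma_factorization by simp
  also have "\<dots> = vc (hc (i2 ell) (hc (i2 \<delta>0) \<gamma>)) (hc (i2 ell) (hc sigma (i2 p)))"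
    by (rule whisker_left_vcomp) auto
  also have "hc (i2 ell) (hc (i2 \<delta>0) \<gamma>) = \<gamma>" by (subst whisker_left_comp1) auto
  also have "hc (i2 ell) (hc sigma (i2 p)) = hc (hc (i2 ell) sigma) (i2 p)" by (subst whisker_left_right_assoc) auto
  finally show "vc \<gamma> (hc (hc (i2 ell) sigma) (i2 p)) = vc \<gamma> (hc (i2 t) (i2 p))" by simp
qed

definition "tau = (SOME x. x \<in> Cell A (i1 C) (c1 \<delta>0 ell) \<and> hc x (i2 \<delta>0) = i2 \<delta>0 \<and> hc x (i2 \<delta>1) = sigma)"

lemma tau: "tau \<in> Cell A (i1 C) (c1 \<delta>0 ell) \<and> hc tau (i2 \<delta>0) = i2 \<delta>0 \<and> hc tau (i2 \<delta>1) = sigma"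
proof -
  have "\<exists>x \<in> Cell A (i1 C) (c1 \<delta>0 ell). hc x (i2 \<delta>0) = i2 \<delta>0 \<and> hc x (i2 \<delta>1) = sigma"
  proof (rule opcomma_induced_2cell[OF opcomma])
    have "hc (i2 (c1 \<delta>0 ell)) \<alpha> = hc (i2 \<delta>0) (hc (i2 ell) \<alpha>)" by (subst whisker_left_comp1) auto
    then show "vc (hc (i2 \<delta>0) (i2 p)) (hc (i2 (i1 C)) \<alpha>) = vc (hc (i2 (c1 \<delta>0 ell)) \<alpha>) (hc sigma (i2 p))"
      using sigma_factorization by simp
  qed (auto simp: Hom_iff Cell_iff)
  then show ?thesis unfolding tau_def by (rule someI2_bex) blast
qed

lemma tau_typing [simp]: "tau \<in> arr2 A" "src2 A tau = i1 C" "tgt2 A tau = c1 \<delta>0 ell"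
  "hc tau (i2 \<delta>0) = i2 \<delta>0" "hc tau (i2 \<delta>1) = sigma"
  using tau by (auto simp: Cell_iff)

definition "eps = (SOME x. x \<in> Cell A s0 ell \<and> hc x (i2 \<delta>0) = i2 (i1 b) \<and> hc x (i2 \<delta>1) = \<eta>)"

lemma eps: "eps \<in> Cell A s0 ell \<and> hc eps (i2 \<delta>0) = i2 (i1 b) \<and> hc eps (i2 \<delta>1) = \<eta>"
proof -
  have "\<exists>x \<in> Cell A s0 ell. hc x (i2 \<delta>0) = i2 (i1 b) \<and> hc x (i2 \<delta>1) = \<eta>"
  proof (rule opcomma_induced_2cell[OF opcomma])
    show "vc (hc (i2 (i1 b)) (i2 p)) (hc (i2 s0) \<alpha>) = vc (hc (i2 ell) \<alpha>) (hc \<eta> (i2 p))"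
      using codensity_eqs cokernel_2cell_eqs by simp
  qed (auto simp: Hom_iff Cell_iff)
  then show ?thesis unfolding eps_def by (rule someI2_bex) blast
qed

lemma eps_typing [simp]: "eps \<in> arr2 A" "src2 A eps = s0" "tgt2 A eps = ell"
  "hc eps (i2 \<delta>0) = i2 (i1 b)" "hc eps (i2 \<delta>1) = \<eta>"
  using eps by (auto simp: Cell_iff)

text \<open>Whiskering with \<open>ell2\<close> sends the two sides of the descent cocycle condition to the
  two sides of the associativity law of algebras; \<open>nu\<close> is where the multiplication \<open>m\<close> enters,
  and \<open>theta\<close> makes this whiskering injective.\<close>

definition "ell2 = (SOME k. k \<in> Hom A P b \<and> c1 k D2 = c1 t ell \<and> c1 k D0 = ell)"

lemma ell2: "ell2 \<in> Hom A P b \<and> c1 ell2 D2 = c1 t ell \<and> c1 ell2 D0 = ell"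
proof -
  have "\<exists>k \<in> Hom A P b. c1 k D2 = c1 t ell \<and> c1 k D0 = ell"
    by (rule pushout_induced_1cell[OF pushout]) (auto simp: Hom_iff)
  then show ?thesis unfolding ell2_def by (rule someI2_bex) blast
qed

lemma ell2_typing [simp]: "ell2 \<in> arr1 A" "src1 A ell2 = P" "tgt1 A ell2 = b"
  "c1 ell2 D2 = c1 t ell" "c1 ell2 D0 = ell"
  using ell2 by (auto simp: Hom_iff)

lemma ell2_comp1_assoc [simp]: "x \<in> arr1 A \<Longrightarrow> tgt1 A x = C \<Longrightarrow> c1 ell2 (c1 D2 x) = c1 t (c1 ell x)"
  "x \<in> arr1 A \<Longrightarrow> tgt1 A x = C \<Longrightarrow> c1 ell2 (c1 D0 x) = c1 ell x"
  using comp1_assoc[of x D2 ell2] comp1_assoc[of x D0 ell2] comp1_assoc[of x ell t] by (auto simp del: comp1_assoc)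

definition "nu = (SOME x. x \<in> Cell A (c1 ell2 D1) ell \<and> hc x (i2 \<delta>0) = i2 (i1 b) \<and> hc x (i2 \<delta>1) = m)"

lemma nu: "nu \<in> Cell A (c1 ell2 D1) ell \<and> hc nu (i2 \<delta>0) = i2 (i1 b) \<and> hc nu (i2 \<delta>1) = m"
proof -
  have "\<exists>x \<in> Cell A (c1 ell2 D1) ell. hc x (i2 \<delta>0) = i2 (i1 b) \<and> hc x (i2 \<delta>1) = m"
  proof (rule opcomma_induced_2cell[OF opcomma])
    have "hc (i2 (c1 ell2 D1)) \<alpha> = hc (i2 ell2) (hc (i2 D1) \<alpha>)" by (subst whisker_left_comp1) auto
    also have "\<dots> = hc (i2 ell2) (vc (hc (i2 D0) \<alpha>) (hc (i2 D2) \<alpha>))" using cokernel_2cell_eqs by simp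
    also have "\<dots> = vc (hc (i2 ell2) (hc (i2 D0) \<alpha>)) (hc (i2 ell2) (hc (i2 D2) \<alpha>))"
      by (rule whisker_left_vcomp) auto
    also have "hc (i2 ell2) (hc (i2 D0) \<alpha>) = \<gamma>" by (subst whisker_left_comp1) auto
    also have "hc (i2 ell2) (hc (i2 D2) \<alpha>) = hc (i2 (c1 t ell)) \<alpha>" by (subst whisker_left_comp1) auto
    also have "\<dots> = hc (i2 t) \<gamma>" by (subst whisker_left_comp1[symmetric]) auto
    finally have e: "hc (i2 (c1 ell2 D1)) \<alpha> = vc \<gamma> (hc (i2 t) \<gamma>)" .
    show "vc (hc (i2 (i1 b)) (i2 p)) (hc (i2 (c1 ell2 D1)) \<alpha>) = vc (hc (i2 ell) \<alpha>) (hc m (i2 p))"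
      unfolding e using codensity_eqs by simp
  qed (auto simp: Hom_iff Cell_iff)
  then show ?thesis unfolding nu_def by (rule someI2_bex) blast
qed

lemma nu_typing [simp]: "nu \<in> arr2 A" "src2 A nu = c1 ell2 D1" "tgt2 A nu = ell"
  "hc nu (i2 \<delta>0) = i2 (i1 b)" "hc nu (i2 \<delta>1) = m"
  using nu by (auto simp: Cell_iff)

definition "theta = (SOME x. x \<in> Cell A (i1 P) (c1 D0 (c1 \<delta>0 ell2)) \<and> hc x (i2 D0) = hc (i2 D0) tau)"

lemma theta: "theta \<in> Cell A (i1 P) (c1 D0 (c1 \<delta>0 ell2)) \<and> hc theta (i2 D0) = hc (i2 D0) tau"
proof -
  have "\<exists>x \<in> Cell A (i1 P) (c1 D0 (c1 \<delta>0 ell2)).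
     hc x (i2 D2) = vc (hc (i2 D0) (hc sigma (i2 ell))) (hc (i2 D2) tau) \<and> hc x (i2 D0) = hc (i2 D0) tau"
  proof (rule pushout_induced_2cell[OF pushout])
    have "hc (vc (hc (i2 D0) (hc sigma (i2 ell))) (hc (i2 D2) tau)) (i2 \<delta>0)
       = vc (hc (hc (i2 D0) (hc sigma (i2 ell))) (i2 \<delta>0)) (hc (hc (i2 D2) tau) (i2 \<delta>0))"
      by (rule whisker_right_vcomp) auto
    also have "hc (hc (i2 D0) (hc sigma (i2 ell))) (i2 \<delta>0) = hc (i2 D0) (hc (hc sigma (i2 ell)) (i2 \<delta>0))"
      by (subst whisker_left_right_assoc) auto
    also have "hc (hc sigma (i2 ell)) (i2 \<delta>0) = sigma" by (subst whisker_right_comp1) auto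
    also have "hc (hc (i2 D2) tau) (i2 \<delta>0) = hc (i2 D2) (hc tau (i2 \<delta>0))"
      by (subst whisker_left_right_assoc) auto
    finally have e: "hc (vc (hc (i2 D0) (hc sigma (i2 ell))) (hc (i2 D2) tau)) (i2 \<delta>0) =
      vc (hc (i2 D0) sigma) (hc (i2 D2) (hc tau (i2 \<delta>0)))" .
    have "hc (hc (i2 D0) tau) (i2 \<delta>1) = hc (i2 D0) (hc tau (i2 \<delta>1))"
      by (subst whisker_left_right_assoc) auto
    with e show "hc (vc (hc (i2 D0) (hc sigma (i2 ell))) (hc (i2 D2) tau)) (i2 \<delta>0) = hc (hc (i2 D0) tau) (i2 \<delta>1)"
      by simp
  qed (auto simp: Hom_iff Cell_iff)
  then have "\<exists>x \<in> Cell A (i1 P) (c1 D0 (c1 \<delta>0 ell2)). hc x (i2 D0) = hc (i2 D0) tau" by blast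
  then show ?thesis unfolding theta_def by (rule someI2_bex) blast
qed

lemma theta_typing [simp]: "theta \<in> arr2 A" "src2 A theta = i1 P" "tgt2 A theta = c1 D0 (c1 \<delta>0 ell2)"
  "hc theta (i2 D0) = hc (i2 D0) tau"
  using theta by (auto simp: Cell_iff)

definition "ell_inv h a = vc (hc (i2 \<delta>0) a) (hc sigma (i2 h))"

lemma ell_inv_ell_whisker:
  assumes h: "h0 \<in> arr1 A" "h1 \<in> arr1 A" "tgt1 A h0 = b" "tgt1 A h1 = b" "src1 A h0 = src1 A h1"
    and be: "\<beta> \<in> arr2 A" "src2 A \<beta> = c1 \<delta>1 h1" "tgt2 A \<beta> = c1 \<delta>0 h0"
  shows "ell_inv h1 (hc (i2 ell) \<beta>) = \<beta>"
proof -
  have "hc tau \<beta> = vc (hc tau (i2 (tgt2 A \<beta>))) (hc (i2 (src2 A tau)) \<beta>)"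
    by (rule hcomp_as_vcomp_whiskers) (use h be in auto)
  also have "hc tau (i2 (tgt2 A \<beta>)) = hc (hc tau (i2 \<delta>0)) (i2 h0)"
    using h be by (subst whisker_right_comp1) auto
  finally have hc_eq: "hc tau \<beta> = \<beta>" using h be by simp
  have "hc tau \<beta> = vc (hc (i2 (tgt2 A tau)) \<beta>) (hc tau (i2 (src2 A \<beta>)))"
    by (rule hcomp_as_vcomp_whiskers') (use h be in auto)
  also have "hc (i2 (tgt2 A tau)) \<beta> = hc (i2 \<delta>0) (hc (i2 ell) \<beta>)"
    using h be by (subst whisker_left_comp1) auto
  also have "hc tau (i2 (src2 A \<beta>)) = hc (hc tau (i2 \<delta>1)) (i2 h1)"
    using h be by (subst whisker_right_comp1) auto
  finally show ?thesis using hc_eq by (simp add: ell_inv_def)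
qed

lemma ell_whisker_inj:
  assumes h: "h0 \<in> arr1 A" "h1 \<in> arr1 A" "tgt1 A h0 = b" "tgt1 A h1 = b" "src1 A h0 = src1 A h1"
    and be: "\<beta> \<in> arr2 A" "src2 A \<beta> = c1 \<delta>1 h1" "tgt2 A \<beta> = c1 \<delta>0 h0"
    and be': "\<beta>' \<in> arr2 A" "src2 A \<beta>' = c1 \<delta>1 h1" "tgt2 A \<beta>' = c1 \<delta>0 h0"
    and e: "hc (i2 ell) \<beta> = hc (i2 ell) \<beta>'"
  shows "\<beta> = \<beta>'"
  using ell_inv_ell_whisker[OF h be] ell_inv_ell_whisker[OF h be'] e by metis

lemma ell_whisker_ell_inv:
  assumes h: "h0 \<in> arr1 A" "h1 \<in> arr1 A" "tgt1 A h0 = b" "tgt1 A h1 = b" "src1 A h0 = src1 A h1"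
    and a: "a \<in> arr2 A" "src2 A a = c1 t h1" "tgt2 A a = h0"
  shows "ell_inv h1 a \<in> arr2 A" "src2 A (ell_inv h1 a) = c1 \<delta>1 h1" "tgt2 A (ell_inv h1 a) = c1 \<delta>0 h0"
    "hc (i2 ell) (ell_inv h1 a) = a"
proof -
  show "ell_inv h1 a \<in> arr2 A" "src2 A (ell_inv h1 a) = c1 \<delta>1 h1" "tgt2 A (ell_inv h1 a) = c1 \<delta>0 h0"
    unfolding ell_inv_def using h a by auto
  have "hc (i2 ell) (ell_inv h1 a) = vc (hc (i2 ell) (hc (i2 \<delta>0) a)) (hc (i2 ell) (hc sigma (i2 h1)))"
    unfolding ell_inv_def by (rule whisker_left_vcomp) (use h a in auto)
  also have "hc (i2 ell) (hc (i2 \<delta>0) a) = a" using h a by (subst whisker_left_comp1) auto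
  also have "hc (i2 ell) (hc sigma (i2 h1)) = hc (hc (i2 ell) sigma) (i2 h1)"
    using h a by (subst whisker_left_right_assoc) auto
  finally show "hc (i2 ell) (ell_inv h1 a) = a" using h a by simp
qed

lemma ell_inv_whisker_right:
  assumes "h \<in> arr1 A" "tgt1 A h = b" "a \<in> arr2 A" "src2 A a = c1 t h" "tgt2 A a = h"
    and "g \<in> arr1 A" "tgt1 A g = src1 A h"
  shows "ell_inv (c1 h g) (hc a (i2 g)) = hc (ell_inv h a) (i2 g)"
proof -
  have "hc (ell_inv h a) (i2 g) = vc (hc (hc (i2 \<delta>0) a) (i2 g)) (hc (hc sigma (i2 h)) (i2 g))"
    unfolding ell_inv_def by (rule whisker_right_vcomp) (use assms in auto)
  also have "hc (hc (i2 \<delta>0) a) (i2 g) = hc (i2 \<delta>0) (hc a (i2 g))"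
    by (rule whisker_left_right_assoc) (use assms in auto)
  also have "hc (hc sigma (i2 h)) (i2 g) = hc sigma (i2 (c1 h g))"
    by (rule whisker_right_comp1) (use assms in auto)
  finally show ?thesis unfolding ell_inv_def by simp
qed

lemma s0_whisker_eq:
  assumes h: "h0 \<in> arr1 A" "h1 \<in> arr1 A" "tgt1 A h0 = b" "tgt1 A h1 = b" "src1 A h0 = src1 A h1"
    and be: "\<beta> \<in> arr2 A" "src2 A \<beta> = c1 \<delta>1 h1" "tgt2 A \<beta> = c1 \<delta>0 h0"
  shows "hc (i2 s0) \<beta> = vc (hc (i2 ell) \<beta>) (hc \<eta> (i2 h1))"
proof -
  have "hc eps \<beta> = vc (hc eps (i2 (tgt2 A \<beta>))) (hc (i2 (src2 A eps)) \<beta>)"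
    by (rule hcomp_as_vcomp_whiskers) (use h be in auto)
  also have "hc eps (i2 (tgt2 A \<beta>)) = hc (hc eps (i2 \<delta>0)) (i2 h0)"
    using h be by (subst whisker_right_comp1) auto
  finally have hc_eq: "hc eps \<beta> = hc (i2 s0) \<beta>" using h be by simp
  have "hc eps \<beta> = vc (hc (i2 (tgt2 A eps)) \<beta>) (hc eps (i2 (src2 A \<beta>)))"
    by (rule hcomp_as_vcomp_whiskers') (use h be in auto)
  also have "hc eps (i2 (src2 A \<beta>)) = hc (hc eps (i2 \<delta>1)) (i2 h1)"
    using h be by (subst whisker_right_comp1) auto
  finally show ?thesis using hc_eq by simp
qed

lemma ell2_whisker_retraction:
  assumes h: "h \<in> arr1 A" "tgt1 A h = b"
    and w: "w \<in> arr2 A" "src2 A w = c1 D2 (c1 \<delta>1 h)" "tgt2 A w = c1 D0 (c1 \<delta>0 h)"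
  shows "vc (hc (i2 (c1 D0 \<delta>0)) (hc (i2 ell2) w)) (hc theta (i2 (c1 D2 (c1 \<delta>1 h)))) = w"
proof -
  have "hc theta w = vc (hc theta (i2 (tgt2 A w))) (hc (i2 (src2 A theta)) w)"
    by (rule hcomp_as_vcomp_whiskers) (use h w in auto)
  also have "hc theta (i2 (tgt2 A w)) = hc (hc theta (i2 D0)) (i2 (c1 \<delta>0 h))"
    using h w by (subst whisker_right_comp1) auto
  also have "\<dots> = hc (i2 D0) (hc tau (i2 (c1 \<delta>0 h)))"
    using h w by (simp add: whisker_left_right_assoc)
  also have "hc tau (i2 (c1 \<delta>0 h)) = hc (hc tau (i2 \<delta>0)) (i2 h)"
    using h w by (subst whisker_right_comp1) auto
  finally have hc_eq: "hc theta w = w" using h w by simp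
  have "hc theta w = vc (hc (i2 (tgt2 A theta)) w) (hc theta (i2 (src2 A w)))"
    by (rule hcomp_as_vcomp_whiskers') (use h w in auto)
  also have "hc (i2 (tgt2 A theta)) w = hc (i2 (c1 D0 \<delta>0)) (hc (i2 ell2) w)"
    using h w by (subst whisker_left_comp1) auto
  finally show ?thesis using hc_eq h w by simp
qed

lemma cocycle_iff_alg_assoc:
  assumes h: "h \<in> arr1 A" "tgt1 A h = b"
    and be: "\<beta> \<in> arr2 A" "src2 A \<beta> = c1 \<delta>1 h" "tgt2 A \<beta> = c1 \<delta>0 h"
  shows "(vc (hc (i2 D0) \<beta>) (hc (i2 D2) \<beta>) = hc (i2 D1) \<beta>) \<longleftrightarrow>
     (vc (hc (i2 ell) \<beta>) (hc (i2 t) (hc (i2 ell) \<beta>)) = vc (hc (i2 ell) \<beta>) (hc m (i2 h)))"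
proof -
  let ?X = "vc (hc (i2 D0) \<beta>) (hc (i2 D2) \<beta>)"
  let ?Y = "hc (i2 D1) \<beta>"
  have tX: "?X \<in> arr2 A" "src2 A ?X = c1 D2 (c1 \<delta>1 h)" "tgt2 A ?X = c1 D0 (c1 \<delta>0 h)"
    using h be by auto
  have tY: "?Y \<in> arr2 A" "src2 A ?Y = c1 D2 (c1 \<delta>1 h)" "tgt2 A ?Y = c1 D0 (c1 \<delta>0 h)"
    using h be by auto
  have "hc (i2 ell2) ?X = vc (hc (i2 ell2) (hc (i2 D0) \<beta>)) (hc (i2 ell2) (hc (i2 D2) \<beta>))"
    by (rule whisker_left_vcomp) (use h be in auto)
  also have "hc (i2 ell2) (hc (i2 D0) \<beta>) = hc (i2 ell) \<beta>" using h be by (subst whisker_left_comp1) auto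
  also have "hc (i2 ell2) (hc (i2 D2) \<beta>) = hc (i2 (c1 t ell)) \<beta>" using h be by (subst whisker_left_comp1) auto
  also have "\<dots> = hc (i2 t) (hc (i2 ell) \<beta>)" using h be by (subst whisker_left_comp1[symmetric]) auto
  finally have LX: "hc (i2 ell2) ?X = vc (hc (i2 ell) \<beta>) (hc (i2 t) (hc (i2 ell) \<beta>))" .
  have "hc nu \<beta> = vc (hc nu (i2 (tgt2 A \<beta>))) (hc (i2 (src2 A nu)) \<beta>)"
    by (rule hcomp_as_vcomp_whiskers) (use h be in auto)
  also have "hc nu (i2 (tgt2 A \<beta>)) = hc (hc nu (i2 \<delta>0)) (i2 h)"
    using h be by (subst whisker_right_comp1) auto
  finally have hc_eq: "hc nu \<beta> = hc (i2 (c1 ell2 D1)) \<beta>" using h be by simp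
  have "hc nu \<beta> = vc (hc (i2 (tgt2 A nu)) \<beta>) (hc nu (i2 (src2 A \<beta>)))"
    by (rule hcomp_as_vcomp_whiskers') (use h be in auto)
  also have "hc nu (i2 (src2 A \<beta>)) = hc (hc nu (i2 \<delta>1)) (i2 h)"
    using h be by (subst whisker_right_comp1) auto
  finally have hc_eq': "hc nu \<beta> = vc (hc (i2 ell) \<beta>) (hc m (i2 h))" using h be by simp
  have LY: "hc (i2 ell2) ?Y = vc (hc (i2 ell) \<beta>) (hc m (i2 h))"
    using hc_eq hc_eq' h be by (subst whisker_left_comp1) auto
  show ?thesis
  proof
    assume "?X = ?Y" then show "vc (hc (i2 ell) \<beta>) (hc (i2 t) (hc (i2 ell) \<beta>)) = vc (hc (i2 ell) \<beta>) (hc m (i2 h))"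
      using LX LY by simp
  next
    assume "vc (hc (i2 ell) \<beta>) (hc (i2 t) (hc (i2 ell) \<beta>)) = vc (hc (i2 ell) \<beta>) (hc m (i2 h))"
    then have "hc (i2 ell2) ?X = hc (i2 ell2) ?Y" using LX LY by simp
    then show "?X = ?Y" using ell2_whisker_retraction[OF h tX] ell2_whisker_retraction[OF h tY] by metis
  qed
qed

lemma desc_mor_iff_alg_mor:
  assumes h: "h0 \<in> arr1 A" "h1 \<in> arr1 A" "tgt1 A h0 = b" "tgt1 A h1 = b" "src1 A h0 = src1 A h1"
    and x: "\<xi> \<in> arr2 A" "src2 A \<xi> = h1" "tgt2 A \<xi> = h0"
    and b1: "\<beta>1 \<in> arr2 A" "src2 A \<beta>1 = c1 \<delta>1 h1" "tgt2 A \<beta>1 = c1 \<delta>0 h1"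
    and b0: "\<beta>0 \<in> arr2 A" "src2 A \<beta>0 = c1 \<delta>1 h0" "tgt2 A \<beta>0 = c1 \<delta>0 h0"
  shows "(vc \<beta>0 (hc (i2 \<delta>1) \<xi>) = vc (hc (i2 \<delta>0) \<xi>) \<beta>1) \<longleftrightarrow>
    (vc \<xi> (hc (i2 ell) \<beta>1) = vc (hc (i2 ell) \<beta>0) (hc (i2 t) \<xi>))"
proof -
  let ?X = "vc \<beta>0 (hc (i2 \<delta>1) \<xi>)"
  let ?Y = "vc (hc (i2 \<delta>0) \<xi>) \<beta>1"
  have tX: "?X \<in> arr2 A" "src2 A ?X = c1 \<delta>1 h1" "tgt2 A ?X = c1 \<delta>0 h0" using h x b0 b1 by auto
  have tY: "?Y \<in> arr2 A" "src2 A ?Y = c1 \<delta>1 h1" "tgt2 A ?Y = c1 \<delta>0 h0" using h x b0 b1 by auto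
  have "hc (i2 ell) ?X = vc (hc (i2 ell) \<beta>0) (hc (i2 ell) (hc (i2 \<delta>1) \<xi>))"
    by (rule whisker_left_vcomp) (use h x b0 b1 in auto)
  also have "hc (i2 ell) (hc (i2 \<delta>1) \<xi>) = hc (i2 t) \<xi>" using h x by (subst whisker_left_comp1) auto
  finally have FX: "hc (i2 ell) ?X = vc (hc (i2 ell) \<beta>0) (hc (i2 t) \<xi>)" .
  have "hc (i2 ell) ?Y = vc (hc (i2 ell) (hc (i2 \<delta>0) \<xi>)) (hc (i2 ell) \<beta>1)"
    by (rule whisker_left_vcomp) (use h x b0 b1 in auto)
  also have "hc (i2 ell) (hc (i2 \<delta>0) \<xi>) = \<xi>" using h x by (subst whisker_left_comp1) auto
  finally have FY: "hc (i2 ell) ?Y = vc \<xi> (hc (i2 ell) \<beta>1)" .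
  show ?thesis
  proof
    assume "?X = ?Y" then show "vc \<xi> (hc (i2 ell) \<beta>1) = vc (hc (i2 ell) \<beta>0) (hc (i2 t) \<xi>)"
      using FX FY by simp
  next
    assume "vc \<xi> (hc (i2 ell) \<beta>1) = vc (hc (i2 ell) \<beta>0) (hc (i2 t) \<xi>)"
    then have "hc (i2 ell) ?X = hc (i2 ell) ?Y" using FX FY by simp
    then show "?X = ?Y" using ell_whisker_inj[OF h tX tY] by blast
  qed
qed

abbreviation "DO y \<equiv> desc_obj A p \<delta>0 \<delta>1 D0 D1 D2 s0 y"
abbreviation "AO y \<equiv> alg_obj A b t m \<eta> y"

definition "desc_to_alg X = (case X of (h, \<beta>) \<Rightarrow> (h, hc (i2 ell) \<beta>))"
definition "alg_to_desc X = (case X of (h, a) \<Rightarrow> (h, ell_inv h a))"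

lemma desc_obj_iff_alg_obj:
  "(h, \<beta>) \<in> DO y \<longleftrightarrow>
     h \<in> Hom A y b \<and> \<beta> \<in> Cell A (c1 \<delta>1 h) (c1 \<delta>0 h) \<and> (h, hc (i2 ell) \<beta>) \<in> AO y"
proof (cases "h \<in> Hom A y b \<and> \<beta> \<in> Cell A (c1 \<delta>1 h) (c1 \<delta>0 h)")
  case True
  then have h: "h \<in> arr1 A" "tgt1 A h = b" "src1 A h = y"
    and be: "\<beta> \<in> arr2 A" "src2 A \<beta> = c1 \<delta>1 h" "tgt2 A \<beta> = c1 \<delta>0 h"
    by (auto simp: Hom_iff Cell_iff)
  have "hc (i2 s0) \<beta> = vc (hc (i2 ell) \<beta>) (hc \<eta> (i2 h))"
    by (rule s0_whisker_eq) (use h be in auto)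
  then show ?thesis
    using True cocycle_iff_alg_assoc[OF h(1,2) be] h be
    unfolding desc_obj_def alg_obj_def by (auto simp: Cell_iff)
qed (auto simp: desc_obj_def)

lemma alg_obj_ell_inv:
  assumes "(h, a) \<in> AO y"
  shows "(h, ell_inv h a) \<in> DO y" "hc (i2 ell) (ell_inv h a) = a"
proof -
  have h: "h \<in> arr1 A" "tgt1 A h = b" "src1 A h = y"
    and a: "a \<in> arr2 A" "src2 A a = c1 t h" "tgt2 A a = h"
    using assms by (auto simp: alg_obj_def Hom_iff Cell_iff)
  note ta = ell_whisker_ell_inv[of h h a, OF h(1,1,2,2) refl a]
  show "hc (i2 ell) (ell_inv h a) = a" using ta by blast
  show "(h, ell_inv h a) \<in> DO y"
    unfolding desc_obj_iff_alg_obj using ta assms h by (auto simp: Hom_iff Cell_iff)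
qed

lemma alg_to_desc_desc_to_alg:
  assumes "X \<in> DO y"
  shows "alg_to_desc (desc_to_alg X) = X"
proof -
  obtain h \<beta> where X: "X = (h, \<beta>)" by (cases X)
  have h: "h \<in> arr1 A" "tgt1 A h = b"
    and \<beta>: "\<beta> \<in> arr2 A" "src2 A \<beta> = c1 \<delta>1 h" "tgt2 A \<beta> = c1 \<delta>0 h"
    using assms unfolding X desc_obj_def by (auto simp: Hom_iff Cell_iff)
  show ?thesis
    using ell_inv_ell_whisker[OF h(1,1,2,2) refl \<beta>]
    unfolding X desc_to_alg_def alg_to_desc_def by simp
qed

lemma desc_to_alg_alg_to_desc:
  "X \<in> AO y \<Longrightarrow> desc_to_alg (alg_to_desc X) = X"
  by (cases X) (simp add: desc_to_alg_def alg_to_desc_def alg_obj_ell_inv)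

lemma desc_to_alg_mem: "X \<in> DO y \<Longrightarrow> desc_to_alg X \<in> AO y"
  by (cases X) (simp add: desc_to_alg_def desc_obj_iff_alg_obj)

lemma alg_to_desc_mem: "X \<in> AO y \<Longrightarrow> alg_to_desc X \<in> DO y"
  by (cases X) (simp add: alg_to_desc_def alg_obj_ell_inv)

lemma desc_to_alg_bij: "bij_betw desc_to_alg (DO y) (AO y)"
  by (rule bij_betw_byWitness[where f' = alg_to_desc])
    (auto simp: alg_to_desc_desc_to_alg desc_to_alg_alg_to_desc desc_to_alg_mem alg_to_desc_mem)

lemma alg_to_desc_bij: "bij_betw alg_to_desc (AO y) (DO y)"
  by (rule bij_betw_byWitness[where f' = desc_to_alg])
    (auto simp: alg_to_desc_desc_to_alg desc_to_alg_alg_to_desc desc_to_alg_mem alg_to_desc_mem)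

lemma desc_mor_eq_alg_mor:
  assumes "X1 \<in> DO y" "X0 \<in> DO y"
  shows "desc_mor A \<delta>0 \<delta>1 X1 X0 = alg_mor A t (desc_to_alg X1) (desc_to_alg X0)"
proof -
  obtain h1 \<beta>1 h0 \<beta>0 where X: "X1 = (h1, \<beta>1)" "X0 = (h0, \<beta>0)" by (cases X1, cases X0)
  have h: "h0 \<in> arr1 A" "h1 \<in> arr1 A" "tgt1 A h0 = b" "tgt1 A h1 = b" "src1 A h0 = src1 A h1"
    and b1: "\<beta>1 \<in> arr2 A" "src2 A \<beta>1 = c1 \<delta>1 h1" "tgt2 A \<beta>1 = c1 \<delta>0 h1"
    and b0: "\<beta>0 \<in> arr2 A" "src2 A \<beta>0 = c1 \<delta>1 h0" "tgt2 A \<beta>0 = c1 \<delta>0 h0"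
    using assms unfolding X desc_obj_def by (auto simp: Hom_iff Cell_iff)
  show ?thesis
    unfolding X desc_mor_def alg_mor_def desc_to_alg_def
    using desc_mor_iff_alg_mor[OF h _ _ _ b1 b0] by (auto simp: Cell_iff)
qed

lemma em_object_from_lax_descent:
  assumes ld: "lax_descent_object A p \<delta>0 \<delta>1 D0 D1 D2 s0 L d \<Psi>"
  shows "em_object A b t m \<eta> L d (hc (i2 ell) \<Psi>)"
proof -
  have L: "L \<in> obj A" and d: "d \<in> arr1 A" "src1 A d = L" "tgt1 A d = b"
    and \<Psi>: "\<Psi> \<in> arr2 A" "src2 A \<Psi> = c1 \<delta>1 d" "tgt2 A \<Psi> = c1 \<delta>0 d"
    and iso: "\<And>y. y \<in> obj A \<Longrightarrow> cat_iso (Hom A y L) (Cell A) (DO y) (desc_mor A \<delta>0 \<delta>1)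
        (\<lambda>g. (c1 d g, hc \<Psi> (i2 g))) (\<lambda>\<xi>. hc (i2 d) \<xi>)"
    using ld unfolding lax_descent_object_def by (auto simp: Hom_iff Cell_iff)
  show ?thesis unfolding em_object_def
  proof (intro conjI ballI)
    show "L \<in> obj A" "d \<in> Hom A L b" "hc (i2 ell) \<Psi> \<in> Cell A (c1 t d) d"
      using L d \<Psi> by (auto simp: Hom_iff Cell_iff)
    fix y assume y: "y \<in> obj A"
    show "cat_iso (Hom A y L) (Cell A) (AO y) (alg_mor A t)
        (\<lambda>g. (c1 d g, hc (hc (i2 ell) \<Psi>) (i2 g))) (\<lambda>\<xi>. hc (i2 d) \<xi>)"
    proof (rule cat_iso_transfer_objects[OF iso[OF y] desc_to_alg_bij])
      show "alg_mor A t (desc_to_alg X) (desc_to_alg X') = desc_mor A \<delta>0 \<delta>1 X X'"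
        if "X \<in> DO y" "X' \<in> DO y" for X X'
        using desc_mor_eq_alg_mor[OF that] by simp
      show "(c1 d g, hc (hc (i2 ell) \<Psi>) (i2 g)) = desc_to_alg (c1 d g, hc \<Psi> (i2 g))"
        if "g \<in> Hom A y L" for g
        using that d \<Psi> by (simp add: desc_to_alg_def whisker_left_right_assoc Hom_iff)
    qed
  qed
qed

lemma lax_descent_from_em_object:
  assumes em: "em_object A b t m \<eta> bT u \<mu>"
  shows "lax_descent_object A p \<delta>0 \<delta>1 D0 D1 D2 s0 bT u (ell_inv u \<mu>)"
proof -
  have bT: "bT \<in> obj A" and u: "u \<in> arr1 A" "src1 A u = bT" "tgt1 A u = b"
    and \<mu>: "\<mu> \<in> arr2 A" "src2 A \<mu> = c1 t u" "tgt2 A \<mu> = u"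
    and iso: "\<And>y. y \<in> obj A \<Longrightarrow> cat_iso (Hom A y bT) (Cell A) (AO y) (alg_mor A t)
        (\<lambda>g. (c1 u g, hc \<mu> (i2 g))) (\<lambda>\<xi>. hc (i2 u) \<xi>)"
    using em unfolding em_object_def by (auto simp: Hom_iff Cell_iff)
  note t\<mu> = ell_whisker_ell_inv[of u u \<mu>, OF u(1,1,3,3) refl \<mu>]
  show ?thesis unfolding lax_descent_object_def
  proof (intro conjI ballI)
    show "bT \<in> obj A" "u \<in> Hom A bT b" "ell_inv u \<mu> \<in> Cell A (c1 \<delta>1 u) (c1 \<delta>0 u)"
      using bT u t\<mu> by (auto simp: Hom_iff Cell_iff)
    fix y assume y: "y \<in> obj A"
    show "cat_iso (Hom A y bT) (Cell A) (DO y) (desc_mor A \<delta>0 \<delta>1)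
        (\<lambda>g. (c1 u g, hc (ell_inv u \<mu>) (i2 g))) (\<lambda>\<xi>. hc (i2 u) \<xi>)"
    proof (rule cat_iso_transfer_objects[OF iso[OF y] alg_to_desc_bij])
      show "desc_mor A \<delta>0 \<delta>1 (alg_to_desc X) (alg_to_desc X') = alg_mor A t X X'"
        if "X \<in> AO y" "X' \<in> AO y" for X X'
        using desc_mor_eq_alg_mor[OF alg_to_desc_mem[OF that(1)] alg_to_desc_mem[OF that(2)]]
          desc_to_alg_alg_to_desc that
        by simp
      show "(c1 u g, hc (ell_inv u \<mu>) (i2 g)) = alg_to_desc (c1 u g, hc \<mu> (i2 g))"
        if "g \<in> Hom A y bT" for g
        using that u \<mu> by (simp add: alg_to_desc_def ell_inv_whisker_right Hom_iff)
    qed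
  qed
qed

lemma em_object_reindex_bij:
  assumes "em_object A b t m \<eta> bT u \<mu>" "y \<in> obj A"
  shows "bij_betw (\<lambda>g. reindex A g (u, \<mu>)) (Hom A y bT) (AO y)"
  using assms unfolding em_object_def cat_iso_def reindex_def by simp

lemma semantic_factorizations_iso:
  assumes em: "em_object A b t m \<eta> bT u \<mu>"
    and pT: "pT \<in> Hom A (src1 A p) bT" "c1 u pT = p" "hc \<mu> (i2 pT) = \<gamma>"
    and ld: "lax_descent_object A p \<delta>0 \<delta>1 D0 D1 D2 s0 L d \<Psi>"
    and pH: "pH \<in> Hom A (src1 A p) L" "c1 d pH = p" "hc \<Psi> (i2 pH) = \<alpha>"
  shows "\<exists>\<phi>. iso1 A \<phi> L bT \<and> c1 u \<phi> = d \<and> c1 \<phi> pH = pT"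
proof -
  note em' = em_object_from_lax_descent[OF ld]
  have bT: "bT \<in> obj A" and u: "u \<in> arr1 A" "src1 A u = bT" "tgt1 A u = b"
    and \<mu>: "\<mu> \<in> arr2 A" "src2 A \<mu> = c1 t u" "tgt2 A \<mu> = u"
    using em unfolding em_object_def by (auto simp: Hom_iff Cell_iff)
  have L: "L \<in> obj A" and d: "d \<in> arr1 A" "src1 A d = L" "tgt1 A d = b"
    and \<Psi>: "\<Psi> \<in> arr2 A" "src2 A \<Psi> = c1 \<delta>1 d" "tgt2 A \<Psi> = c1 \<delta>0 d"
    using ld unfolding lax_descent_object_def by (auto simp: Hom_iff Cell_iff)
  obtain \<phi> where \<phi>: "iso1 A \<phi> L bT" "reindex A \<phi> (u, \<mu>) = (d, hc (i2 ell) \<Psi>)"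
    using representing_objects_iso[OF L bT em_object_reindex_bij[OF em'] em_object_reindex_bij[OF em]]
      d \<Psi> u \<mu> by auto
  have \<phi>': "\<phi> \<in> arr1 A" "src1 A \<phi> = L" "tgt1 A \<phi> = bT" and u\<phi>: "c1 u \<phi> = d"
    using \<phi> unfolding iso1_def by (auto simp: Hom_iff reindex_def)
  have pH': "pH \<in> arr1 A" "src1 A pH = src1 A p" "tgt1 A pH = L" using pH(1) by (auto simp: Hom_iff)
  have "reindex A (c1 \<phi> pH) (u, \<mu>) = reindex A pH (d, hc (i2 ell) \<Psi>)"
    unfolding \<phi>(2)[symmetric] by (rule reindex_comp1) (use u \<mu> \<phi>' pH' in auto)
  also have "\<dots> = (p, hc (i2 ell) (hc \<Psi> (i2 pH)))"
    using pH(2) pH' d \<Psi> by (simp add: reindex_def whisker_left_right_assoc)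
  also have "\<dots> = reindex A pT (u, \<mu>)"
    using pT(2,3) pH(3) by (simp add: reindex_def)
  finally have "reindex A (c1 \<phi> pH) (u, \<mu>) = reindex A pT (u, \<mu>)" .
  moreover have "inj_on (\<lambda>g. reindex A g (u, \<mu>)) (Hom A (src1 A p) bT)"
    using em_object_reindex_bij[OF em] by (simp add: bij_betw_def)
  ultimately have "c1 \<phi> pH = pT"
    by (intro inj_onD[of "\<lambda>g. reindex A g (u, \<mu>)"])
      (use \<phi>' pH' pT(1) in \<open>auto simp: Hom_iff\<close>)
  with \<phi>(1) u\<phi> show ?thesis by blast
qed

end

theorem theorem4p8:
  fixes A :: "('o, 'a, 'c, 'z) two_cat_scheme"
  assumes "two_category A"
    and "p \<in> arr1 A"
    and "cokernel_diagram A p C \<delta>0 \<delta>1 \<alpha> P D0 D1 D2 s0"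
    and "is_right_kan A p p t \<gamma>"
    and "preserves_right_kan A \<delta>0 p p t \<gamma>"
    and "codensity_monad A p t \<gamma> m \<eta>"
  shows "((\<exists>bT u \<mu>. em_object A (tgt1 A p) t m \<eta> bT u \<mu>) \<longleftrightarrow>
          (\<exists>L d \<Psi>. lax_descent_object A p \<delta>0 \<delta>1 D0 D1 D2 s0 L d \<Psi>)) \<and>
         (\<forall>bT u \<mu> pT L d \<Psi> pH.
            em_object A (tgt1 A p) t m \<eta> bT u \<mu> \<and>
            pT \<in> Hom A (src1 A p) bT \<and> comp1 A u pT = p \<and> hcomp A \<mu> (ident2 A pT) = \<gamma> \<and>
            lax_descent_object A p \<delta>0 \<delta>1 D0 D1 D2 s0 L d \<Psi> \<and>
            pH \<in> Hom A (src1 A p) L \<and> comp1 A d pH = p \<and> hcomp A \<Psi> (ident2 A pH) = \<alpha>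
          \<longrightarrow> (\<exists>\<phi>. iso1 A \<phi> L bT \<and> comp1 A u \<phi> = d \<and> comp1 A \<phi> pH = pT))"
proof -
  interpret codensity_setting A p C \<delta>0 \<delta>1 \<alpha> P D0 D1 D2 s0 t \<gamma> m \<eta>
    using assms by unfold_locales
  show ?thesis
  proof (intro conjI allI impI)
    show "(\<exists>bT u \<mu>. em_object A b t m \<eta> bT u \<mu>) \<longleftrightarrow>
          (\<exists>L d \<Psi>. lax_descent_object A p \<delta>0 \<delta>1 D0 D1 D2 s0 L d \<Psi>)"
      using em_object_from_lax_descent lax_descent_from_em_object by blast
  next
    fix bT u \<mu> pT L d \<Psi> pH
    assume "em_object A b t m \<eta> bT u \<mu> \<and>
      pT \<in> Hom A (src1 A p) bT \<and> c1 u pT = p \<and> hc \<mu> (i2 pT) = \<gamma> \<and>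
      lax_descent_object A p \<delta>0 \<delta>1 D0 D1 D2 s0 L d \<Psi> \<and>
      pH \<in> Hom A (src1 A p) L \<and> c1 d pH = p \<and> hc \<Psi> (i2 pH) = \<alpha>"
    then show "\<exists>\<phi>. iso1 A \<phi> L bT \<and> c1 u \<phi> = d \<and> c1 \<phi> pH = pT"
      using semantic_factorizations_iso by blast
  qed
qed

end
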